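(* Let $G=(V,E)$ be a connected graph with $n$ nodes and $m$ edges, and let $r\in V$. Run the content-oblivious BFS algorithm $\mathcal{A}$ with root $r$ in the asynchronous model, under arbitrary finite message delays, non-FIFO delivery, and arbitrary corruption of message contents. Then $\mathcal{A}$ terminates, and the following hold. - The edges $\{u,\mathrm{parent}_u\}$ for $u\neq r$ form a BFS tree $\mathcal{T}$ of $G$ rooted at $r$: every node $u\neq r$ at distance $k$ from $r$ has $\mathrm{parent}_u$ equal to a neighbour at distance $k-1$ from $r$. - At the end, for every node $u$, $\mathrm{children}_u=\{v:\mathrm{parent}_v=u\}$. Thus each node knows its parent and all its incident edges in $\mathcal{T}$. - The algorithm sends $O(nm)$ messages in total.
   Context: Asynchronous model: there are no timing assumptions, and messages are not necessarily delivered in FIFO order. A node is asleep until it receives a message. On receiving one, it performs local computation, sends zero or more messages to neighbours, and goes back to sleep. Each node knows $n$ and its neighbour set $\mathcal{N}_u$. Algorithm $\mathcal{A}$ (content-oblivious BFS). Nodes ignore the contents of all messages; decisions depend only on from which neighbour a message arrives. Every node $u$ has variables $\mathrm{state}_u\in\{\mathsf{INIT},\mathsf{IDLE},\mathsf{EXPLORE},\mathsf{DONE}\}$, $\mathrm{parent}_u$, $\mathrm{children}_u$ and $\mathrm{count}_u$. All nodes start in $\mathsf{INIT}$. The root $r$ sets $\mathrm{parent}_r=\bot$, $\mathrm{children}_r=\mathcal{N}_r$, $\mathrm{count}_r=0$ and $\mathrm{state}_r=\mathsf{IDLE}$. It then repeatedly invokes Explore until $\mathrm{state}_r=\mathsf{DONE}$.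 The nodes handle incoming messages as follows. (i) SetParent: a node $u$ in $\mathsf{INIT}$ that receives a message from $v$ sets $\mathrm{parent}_u=v$, $\mathrm{children}_u=\mathcal{N}_u\setminus\{v\}$, $\mathrm{count}_u=0$ and $\mathrm{state}_u=\mathsf{IDLE}$, and sends a message to $v$. (ii) MarkSibling: a node $u$ in $\mathsf{IDLE}$ or $\mathsf{DONE}$ that receives a message from some $v\neq\mathrm{parent}_u$ removes $v$ from $\mathrm{children}_u$ and sends a message to $v$. (iii) Explore: a node $u$ in $\mathsf{IDLE}$ that receives a message from $\mathrm{parent}_u$ (or the root, when it invokes Explore) proceeds as follows. - It sets $\mathrm{state}_u=\mathsf{EXPLORE}$ and increments $\mathrm{count}_u$. - Sequentially, for each $v\in\mathcal{N}_u\setminus\{\mathrm{parent}_u\}$, it sends a message to $v$ and waits until it receives a message from $v$. - If $\mathrm{count}_u=n-1$, it performs an extra "dummy" exploration: sequentially, for each $v\in\mathrm{children}_u$, it sends a message to $v$ and waits for a message from $v$. - It then sends a message to $\mathrm{parent}_u$; the root skips this step. - Finally it sets $\mathrm{state}_u=\mathsf{DONE}$ if $\mathrm{count}_u=n-1$, and $\mathrm{state}_u=\mathsf{IDLE}$ otherwise. *)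

theory Defs
  imports Main
begin

text \<open>A simple undirected graph on a finite vertex set V, given by a symmetric,
irreflexive edge relation E (a set of ordered pairs, each undirected edge appearing
in both orientations).\<close>

definition simple_graph :: "'v set \<Rightarrow> ('v \<times> 'v) set \<Rightarrow> bool" where
  "simple_graph V E \<longleftrightarrow> finite V \<and> E \<subseteq> V \<times> V \<and> sym E \<and> (\<forall>x. (x, x) \<notin> E)"

definition graph_connected :: "'v set \<Rightarrow> ('v \<times> 'v) set \<Rightarrow> bool" where
  "graph_connected V E \<longleftrightarrow> (\<forall>u\<in>V. \<forall>v\<in>V. (u, v) \<in> E\<^sup>*)"

definition nbrs :: "('v \<times> 'v) set \<Rightarrow> 'v \<Rightarrow> 'v set" where
  "nbrs E u = {v. (u, v) \<in> E}"

definition num_edges :: "('v \<times> 'v) set \<Rightarrow> nat" where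
  "num_edges E = card {{u, v} | u v. (u, v) \<in> E}"

definition gdist :: "('v \<times> 'v) set \<Rightarrow> 'v \<Rightarrow> 'v \<Rightarrow> nat" where
  "gdist E u v = (LEAST k. (u, v) \<in> E ^^ k)"

datatype status = INIT | IDLE | EXPLORE | DONE

text \<open>Local state: the paper's variables state, parent, children, count, plus the
program position of the (sequential) Explore procedure: the set of neighbours still to
be sent to in the current loop, the neighbour currently waited for, and whether the
dummy exploration has started.\<close>
record 'v lstate =
  lstatus :: status
  lparent :: "'v option"
  lchildren :: "'v set"
  lcount :: nat
  ltodo :: "'v set"
  lwait :: "'v option"
  ldummy :: bool

text \<open>Messages are content-free (content-oblivious algorithm, contents may be
arbitrarily corrupted): the network is described by the number of messages in transit
on each directed edge (non-FIFO, any in-transit message may be delivered next).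
nsent counts all messages sent so far.\<close>
record 'v conf =
  loc :: "'v \<Rightarrow> 'v lstate"
  chan :: "'v \<times> 'v \<Rightarrow> nat"
  nsent :: nat

definition setl :: "'v conf \<Rightarrow> 'v \<Rightarrow> 'v lstate \<Rightarrow> 'v conf" where
  "setl c u s = c\<lparr>loc := (loc c)(u := s)\<rparr>"

definition send :: "'v conf \<Rightarrow> 'v \<Rightarrow> 'v \<Rightarrow> 'v conf" where
  "send c u w = c\<lparr>chan := (chan c)((u, w) := chan c (u, w) + 1), nsent := nsent c + 1\<rparr>"

definition recv :: "'v conf \<Rightarrow> 'v \<Rightarrow> 'v \<Rightarrow> 'v conf" where
  "recv c v u = c\<lparr>chan := (chan c)((v, u) := chan c (v, u) - 1)\<rparr>"

definition begin_explore :: "'v set \<Rightarrow> 'v lstate \<Rightarrow> 'v lstate" where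
  "begin_explore nb s = s\<lparr>lstatus := EXPLORE, lcount := lcount s + 1,
      ltodo := nb - set_option (lparent s), lwait := None, ldummy := False\<rparr>"

text \<open>Local continuation of Explore at node u (n = number of nodes) until it either
sends to the next neighbour and waits, or finishes.\<close>
inductive adv :: "nat \<Rightarrow> 'v \<Rightarrow> 'v conf \<Rightarrow> 'v conf \<Rightarrow> bool" for n :: nat where
  adv_send: "w \<in> ltodo (loc c u) \<Longrightarrow>
    adv n u c (send (setl c u ((loc c u)\<lparr>ltodo := ltodo (loc c u) - {w}, lwait := Some w\<rparr>)) u w)"
| adv_dummy: "ltodo (loc c u) = {} \<Longrightarrow> \<not> ldummy (loc c u) \<Longrightarrow> lcount (loc c u) = n - 1 \<Longrightarrow>
    adv n u (setl c u ((loc c u)\<lparr>ltodo := lchildren (loc c u), ldummy := True\<rparr>)) c' \<Longrightarrow>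
    adv n u c c'"
| adv_fin: "ltodo (loc c u) = {} \<Longrightarrow> ldummy (loc c u) \<or> lcount (loc c u) \<noteq> n - 1 \<Longrightarrow>
    c' = setl c u ((loc c u)\<lparr>lstatus := (if lcount (loc c u) = n - 1 then DONE else IDLE)\<rparr>) \<Longrightarrow>
    adv n u c (case lparent (loc c u) of None \<Rightarrow> c' | Some p \<Rightarrow> send c' u p)"

definition init_conf :: "('v \<times> 'v) set \<Rightarrow> 'v \<Rightarrow> 'v conf" where
  "init_conf E r =
     \<lparr>loc = (\<lambda>u. if u = r
                then \<lparr>lstatus = IDLE, lparent = None, lchildren = nbrs E r, lcount = 0,
                      ltodo = {}, lwait = None, ldummy = False\<rparr>
                else \<lparr>lstatus = INIT, lparent = None, lchildren = {}, lcount = 0,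
                      ltodo = {}, lwait = None, ldummy = False\<rparr>),
      chan = (\<lambda>_. 0), nsent = 0\<rparr>"

text \<open>One atomic step of the asynchronous system: either the root invokes Explore
(when IDLE), or some in-transit message (from v to u) is delivered and handled.
A message for which no rule applies is consumed without effect.\<close>
inductive step :: "'v set \<Rightarrow> ('v \<times> 'v) set \<Rightarrow> 'v \<Rightarrow> 'v conf \<Rightarrow> 'v conf \<Rightarrow> bool"
  for V :: "'v set" and E :: "('v \<times> 'v) set" and r :: 'v where
  root_invoke: "lstatus (loc c r) = IDLE \<Longrightarrow>
    adv (card V) r (setl c r (begin_explore (nbrs E r) (loc c r))) c' \<Longrightarrow> step V E r c c'"
| set_parent: "chan c (v, u) > 0 \<Longrightarrow> lstatus (loc c u) = INIT \<Longrightarrow>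
    step V E r c (send (setl (recv c v u) u ((loc c u)\<lparr>lstatus := IDLE, lparent := Some v,
                     lchildren := nbrs E u - {v}, lcount := 0\<rparr>)) u v)"
| mark_sibling: "chan c (v, u) > 0 \<Longrightarrow> lstatus (loc c u) \<in> {IDLE, DONE} \<Longrightarrow>
    lparent (loc c u) \<noteq> Some v \<Longrightarrow>
    step V E r c (send (setl (recv c v u) u ((loc c u)\<lparr>lchildren := lchildren (loc c u) - {v}\<rparr>)) u v)"
| explore: "chan c (v, u) > 0 \<Longrightarrow> lstatus (loc c u) = IDLE \<Longrightarrow> lparent (loc c u) = Some v \<Longrightarrow>
    adv (card V) u (setl (recv c v u) u (begin_explore (nbrs E u) (loc c u))) c' \<Longrightarrow>
    step V E r c c'"
| reply: "chan c (v, u) > 0 \<Longrightarrow> lstatus (loc c u) = EXPLORE \<Longrightarrow> lwait (loc c u) = Some v \<Longrightarrow>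
    adv (card V) u (setl (recv c v u) u ((loc c u)\<lparr>lwait := None\<rparr>)) c' \<Longrightarrow>
    step V E r c c'"
| ignore: "chan c (v, u) > 0 \<Longrightarrow> lstatus (loc c u) \<noteq> INIT \<Longrightarrow>
    \<not> (lstatus (loc c u) \<in> {IDLE, DONE} \<and> lparent (loc c u) \<noteq> Some v) \<Longrightarrow>
    \<not> (lstatus (loc c u) = IDLE \<and> lparent (loc c u) = Some v) \<Longrightarrow>
    \<not> (lstatus (loc c u) = EXPLORE \<and> lwait (loc c u) = Some v) \<Longrightarrow>
    step V E r c (recv c v u)"

definition reachable :: "'v set \<Rightarrow> ('v \<times> 'v) set \<Rightarrow> 'v \<Rightarrow> 'v conf \<Rightarrow> bool" where
  "reachable V E r c \<longleftrightarrow> (step V E r)\<^sup>*\<^sup>* (init_conf E r) c"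

definition terminal :: "'v set \<Rightarrow> ('v \<times> 'v) set \<Rightarrow> 'v \<Rightarrow> 'v conf \<Rightarrow> bool" where
  "terminal V E r c \<longleftrightarrow> \<not> (\<exists>c'. step V E r c c')"

end

theory Submission
  imports Defs
begin

(* The nodes in state EXPLORE form a
   single path of the tree from the root, each waiting for the next, so at most one message is
   in transit and the execution is essentially sequential.  In the k-th exploration of the root,
   a tree node at depth j performs its (k - j)-th exploration: along every tree edge the child's
   count lags its parent's by one.  Hence a node first receives a probe in round d + 1 from a
   node at depth d, which makes the parents BFS parents, and by round n - 1 every node has
   joined.  A probe reaching a node that has already joined is answered by MarkSibling, which
   removes the prober from the children set; at the end every node has completed its first
   exploration, so exactly the tree children remain.  One exploration of u costs at most
   6 deg u + 2 messages and every node explores at most n - 1 times, which gives the O(nm)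
   bound; a potential that every step increases and that this bound caps gives termination. *)

abbreviation status :: "'v conf \<Rightarrow> 'v \<Rightarrow> status" where "status c u \<equiv> lstatus (loc c u)"

abbreviation parent :: "'v conf \<Rightarrow> 'v \<Rightarrow> 'v option" where "parent c u \<equiv> lparent (loc c u)"

abbreviation children :: "'v conf \<Rightarrow> 'v \<Rightarrow> 'v set" where "children c u \<equiv> lchildren (loc c u)"

abbreviation count :: "'v conf \<Rightarrow> 'v \<Rightarrow> nat" where "count c u \<equiv> lcount (loc c u)"

abbreviation todo :: "'v conf \<Rightarrow> 'v \<Rightarrow> 'v set" where "todo c u \<equiv> ltodo (loc c u)"

abbreviation waiting :: "'v conf \<Rightarrow> 'v \<Rightarrow> 'v option" where "waiting c u \<equiv> lwait (loc c u)"

abbreviation dummy :: "'v conf \<Rightarrow> 'v \<Rightarrow> bool" where "dummy c u \<equiv> ldummy (loc c u)"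

lemma setl_simps[simp]:
  "loc (setl c u s) = (loc c)(u := s)" "chan (setl c u s) = chan c" "nsent (setl c u s) = nsent c"
  by (simp_all add: setl_def)

lemma send_simps[simp]:
  "loc (send c u w) = loc c" "chan (send c u w) = (chan c)((u, w) := chan c (u, w) + 1)"
  "nsent (send c u w) = Suc (nsent c)"
  by (simp_all add: send_def)

lemma recv_simps[simp]:
  "loc (recv c v u) = loc c" "chan (recv c v u) = (chan c)((v, u) := chan c (v, u) - 1)"
  "nsent (recv c v u) = nsent c"
  by (simp_all add: recv_def)

lemma sum_eq_off_point:
  "finite A \<Longrightarrow> v \<in> A \<Longrightarrow> (\<And>z. z \<in> A \<Longrightarrow> z \<noteq> v \<Longrightarrow> g z = f z) \<Longrightarrow> sum g A + f v = sum f A + g v"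
proof -
  assume a: "finite A" "v \<in> A" "\<And>z. z \<in> A \<Longrightarrow> z \<noteq> v \<Longrightarrow> g z = f z"
  have "sum g A = g v + sum g (A - {v})" "sum f A = f v + sum f (A - {v})"
    using a by (simp_all add: sum.remove)
  moreover have "sum g (A - {v}) = sum f (A - {v})" using a by (intro sum.cong) auto
  ultimately show ?thesis by (simp add: algebra_simps)
qed

lemma sum_eq_off_two_points:
  fixes f g :: "'a \<Rightarrow> nat"
  shows "finite A \<Longrightarrow> u \<in> A \<Longrightarrow> v \<in> A \<Longrightarrow> u \<noteq> v \<Longrightarrow>
    (\<And>z. z \<in> A \<Longrightarrow> z \<noteq> u \<Longrightarrow> z \<noteq> v \<Longrightarrow> g z = f z) \<Longrightarrow> sum g A + f u + f v = sum f A + g u + g v"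
proof -
  assume a: "finite A" "u \<in> A" "v \<in> A" "u \<noteq> v" "\<And>z. z \<in> A \<Longrightarrow> z \<noteq> u \<Longrightarrow> z \<noteq> v \<Longrightarrow> g z = f z"
  let ?h = "\<lambda>z. if z = u then f u else g z"
  have "sum g A + f u = sum ?h A + g u" using sum_eq_off_point[OF a(1,2), of ?h g] by auto
  moreover have "sum ?h A + f v = sum f A + g v" using sum_eq_off_point[OF a(1,3), of f ?h] a(4,5)
    by auto
  ultimately show ?thesis by linarith
qed

section \<open>Graphs\<close>

lemma sum_card_nbrs:
  assumes "finite V" and "E \<subseteq> V \<times> V"
  shows "(\<Sum>u\<in>V. card (nbrs E u)) = card E"
proof -
  have "E = (SIGMA u:V. nbrs E u)" using assms(2) by (auto simp: nbrs_def)
  moreover have "finite (nbrs E u)" for u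
    using assms by (auto intro: finite_subset[of _ V] simp: nbrs_def)
  ultimately show ?thesis using card_SigmaI[OF assms(1), of "nbrs E"] by simp
qed

lemma card_le_twice_num_edges:
  assumes "finite E"
  shows "card E \<le> 2 * num_edges E"
proof -
  let ?S = "{{u, v} | u v. (u, v) \<in> E}"
  let ?F = "\<lambda>s. {e \<in> E. (\<lambda>(a, b). {a, b}) e = s}"
  have fS: "finite ?S"
  proof -
    have "?S = (\<lambda>(a, b). {a, b}) ` E" by auto
    thus ?thesis using assms by simp
  qed
  have "E \<subseteq> (\<Union>s\<in>?S. ?F s)" by auto
  hence "card E \<le> card (\<Union>s\<in>?S. ?F s)" using fS assms by (intro card_mono) auto
  also have "\<dots> \<le> (\<Sum>s\<in>?S. card (?F s))" using card_UN_le[OF fS] by blast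
  also have "\<dots> \<le> (\<Sum>s\<in>?S. 2)"
  proof (rule sum_mono)
    fix s assume "s \<in> ?S"
    then obtain a b where s: "s = {a, b}" by blast
    have "?F s \<subseteq> {(a, b), (b, a)}"
    proof
      fix e assume e: "e \<in> ?F s"
      obtain x y where xy: "e = (x, y)" by (cases e)
      hence "{x, y} = {a, b}" using e s by simp
      thus "e \<in> {(a, b), (b, a)}" using xy by (auto simp only: doubleton_eq_iff)
    qed
    hence "card (?F s) \<le> card {(a, b), (b, a)}" by (rule card_mono[rotated]) simp
    also have "\<dots> \<le> 2" by (cases "a = b") simp_all
    finally show "card (?F s) \<le> 2" .
  qed
  also have "\<dots> = 2 * num_edges E" by (simp add: num_edges_def)
  finally show ?thesis .
qed

locale finite_graph =
  fixes V :: "'v set" and E :: "('v \<times> 'v) set"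
  assumes simple: "simple_graph V E"
begin

abbreviation n :: nat where "n \<equiv> card V"

abbreviation N :: "'v \<Rightarrow> 'v set" where "N \<equiv> nbrs E"

lemma finite_V: "finite V" using simple by (simp add: simple_graph_def)

lemma E_subset: "E \<subseteq> V \<times> V" using simple by (simp add: simple_graph_def)

lemma edge_sym: "(u, v) \<in> E \<Longrightarrow> (v, u) \<in> E" using simple
  by (auto simp: simple_graph_def sym_def)

lemma edge_irrefl: "(u, u) \<notin> E" using simple by (simp add: simple_graph_def)

lemma finite_E: "finite E" using E_subset finite_V by (meson finite_SigmaI finite_subset)

lemma in_N_iff: "w \<in> N u \<longleftrightarrow> (u, w) \<in> E" by (simp add: nbrs_def)

lemma N_subset_V: "N u \<subseteq> V" using E_subset by (auto simp: nbrs_def)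

lemma finite_N: "finite (N u)" using N_subset_V finite_V finite_subset by blast

lemma edge_in_V1: "(u, v) \<in> E \<Longrightarrow> u \<in> V" and edge_in_V2: "(u, v) \<in> E \<Longrightarrow> v \<in> V"
  using E_subset by auto

end

locale rooted_graph = finite_graph V E for V :: "'v set" and E +
  fixes r :: 'v
  assumes connected: "graph_connected V E" and root_in_V: "r \<in> V"
begin

abbreviation d :: "'v \<Rightarrow> nat" where "d \<equiv> gdist E r"

lemma path_from_root: "u \<in> V \<Longrightarrow> \<exists>k. (r, u) \<in> E ^^ k"
  using connected root_in_V by (auto simp: graph_connected_def rtrancl_power)

lemma d_path_length: "u \<in> V \<Longrightarrow> (r, u) \<in> E ^^ d u"
  unfolding gdist_def using path_from_root by (rule LeastI_ex)

lemma d_le_path_length: "(r, u) \<in> E ^^ k \<Longrightarrow> d u \<le> k"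
  unfolding gdist_def by (rule Least_le)

lemma d_r[simp]: "d r = 0" using d_le_path_length[of r 0] by simp

lemma d_eq_0_root: "u \<in> V \<Longrightarrow> d u = 0 \<Longrightarrow> u = r"
  using d_path_length[of u] by simp

lemma d_edge_le: "(u, v) \<in> E \<Longrightarrow> d v \<le> d u + 1"
proof -
  assume e: "(u, v) \<in> E"
  hence "(r, v) \<in> E ^^ Suc (d u)" using d_path_length[OF edge_in_V1[OF e]] by auto
  thus ?thesis using d_le_path_length by fastforce
qed

lemma d_predecessor: "u \<in> V \<Longrightarrow> u \<noteq> r \<Longrightarrow> \<exists>p. (p, u) \<in> E \<and> d p + 1 = d u"
proof -
  assume u: "u \<in> V" "u \<noteq> r"
  then obtain j where j: "d u = Suc j" using d_eq_0_root by (cases "d u") auto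
  then obtain p where p: "(r, p) \<in> E ^^ j" "(p, u) \<in> E"
    using d_path_length[OF u(1)] by (auto elim: relpow_Suc_E)
  have "d p \<le> j" using d_le_path_length p(1) by blast
  moreover have "d u \<le> d p + 1" using d_edge_le p(2) by blast
  ultimately show ?thesis using p j by (intro exI[of _ p]) auto
qed

lemma depth_induct[consumes 1, case_names step]:
  assumes "u \<in> V" and "\<And>u. u \<in> V \<Longrightarrow> (\<And>v. v \<in> V \<Longrightarrow> d v < d u \<Longrightarrow> P v) \<Longrightarrow> P u"
  shows "P u"
proof -
  have "u \<in> V \<longrightarrow> P u" for u
    by (induct u rule: measure_induct_rule[where f = d]) (use assms(2) in blast)
  thus ?thesis using assms(1) by blast
qed

lemma d_attained: "u \<in> V \<Longrightarrow> k \<le> d u \<Longrightarrow> \<exists>v\<in>V. d v = k"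
proof (induct u arbitrary: k rule: depth_induct)
  case (step u)
  show ?case
  proof (cases "k = d u")
    case True thus ?thesis using step by blast
  next
    case False
    hence "u \<noteq> r" using step by auto
    then obtain p where p: "(p, u) \<in> E" "d p + 1 = d u" using d_predecessor step by blast
    have "k \<le> d p" using p(2) step(3) False by simp
    moreover have "d p < d u" using p(2) by simp
    ultimately show ?thesis using step(2)[OF edge_in_V1[OF p(1)]] by blast
  qed
qed

lemma d_le_n_minus_1: "u \<in> V \<Longrightarrow> d u \<le> n - 1"
proof -
  assume u: "u \<in> V"
  have "{0..d u} \<subseteq> d ` V" using d_attained[OF u] by (auto simp: image_iff) (metis)
  hence "card {0..d u} \<le> card (d ` V)" using finite_V by (intro card_mono) auto
  also have "\<dots> \<le> n" using finite_V card_image_le by blast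
  finally show ?thesis by simp
qed

end

locale bfs = rooted_graph V E r for V :: "'v set" and E r +
  assumes two_nodes: "2 \<le> card V"
begin

lemma n_minus_1_pos: "1 \<le> n - 1" using two_nodes by simp

lemma N_nonempty: "u \<in> V \<Longrightarrow> N u \<noteq> {}"
proof -
  assume u: "u \<in> V"
  obtain v where v: "v \<in> V" "v \<noteq> u"
  proof -
    have "card V \<noteq> card {u}" using two_nodes by simp
    hence "V \<noteq> {u}" by blast
    thus ?thesis using that u by blast
  qed
  hence "(u, v) \<in> E\<^sup>*" using connected u by (auto simp: graph_connected_def)
  then obtain w where "(u, w) \<in> E" using v(2) by (metis converse_rtranclE)
  thus ?thesis by (auto simp: nbrs_def)
qed

lemma n_le_card_E: "n \<le> card E"
proof -
  let ?f = "\<lambda>u. (u, SOME w. (u, w) \<in> E)"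
  have "\<exists>w. (u, w) \<in> E" if "u \<in> V" for u using N_nonempty[OF that]
    by (auto simp: in_N_iff)
  hence "?f ` V \<subseteq> E" by (auto intro: someI_ex)
  moreover have "inj_on ?f V" by (auto simp: inj_on_def)
  ultimately show ?thesis using card_inj_on_le finite_E by blast
qed

end

section \<open>The invariant\<close>

text \<open>\<open>pending c x y\<close>: \<open>y\<close> has not yet received the probe of \<open>x\<close>'s current exploration loop.
  \<open>probed c w x\<close>: \<open>x\<close> has received the probe of \<open>w\<close>'s first exploration.\<close>

definition pending :: "'v conf \<Rightarrow> 'v \<Rightarrow> 'v \<Rightarrow> bool" where
  "pending c x y \<longleftrightarrow> y \<in> todo c x \<or> (waiting c x = Some y \<and> 0 < chan c (x, y))"

definition probed :: "'v conf \<Rightarrow> 'v \<Rightarrow> 'v \<Rightarrow> bool" where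
  "probed c w x \<longleftrightarrow>
     1 \<le> count c w \<and> \<not> (status c w = EXPLORE \<and> \<not> dummy c w \<and> count c w = 1 \<and> pending c w x)"

context bfs
begin

definition root_ok :: "'v conf \<Rightarrow> bool" where
  "root_ok c \<longleftrightarrow> status c r \<noteq> INIT \<and> parent c r = None"

definition parents_ok :: "'v conf \<Rightarrow> bool" where
  "parents_ok c \<longleftrightarrow> (\<forall>u\<in>V. (u \<noteq> r \<longrightarrow> (status c u = INIT \<longleftrightarrow> parent c u = None)) \<and>
     (\<forall>p. parent c u = Some p \<longrightarrow> (u, p) \<in> E \<and> d p + 1 = d u \<and> status c p \<noteq> INIT))"

definition children_ok_at :: "'v \<Rightarrow> 'v lstate \<Rightarrow> bool" where
  "children_ok_at x s \<longleftrightarrow> lchildren s \<subseteq> N x - set_option (lparent s)"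

definition count_ok_at :: "'v lstate \<Rightarrow> bool" where
  "count_ok_at s \<longleftrightarrow> lcount s \<le> n - 1 \<and> (lstatus s = DONE \<longrightarrow> lcount s = n - 1) \<and>
     (lstatus s = IDLE \<longrightarrow> lcount s \<noteq> n - 1) \<and> (lstatus s = INIT \<longrightarrow> lcount s = 0) \<and>
     (lstatus s = EXPLORE \<longrightarrow> 1 \<le> lcount s)"

definition explore_ok_at :: "'v \<Rightarrow> 'v lstate \<Rightarrow> bool" where
  "explore_ok_at x s \<longleftrightarrow> (lstatus s = EXPLORE \<longrightarrow>
     ltodo s \<subseteq> (if ldummy s then lchildren s else N x - set_option (lparent s)) \<and>
     (ldummy s \<longrightarrow> lcount s = n - 1) \<and>
     (\<forall>w. lwait s = Some w \<longrightarrow> w \<in> N x - set_option (lparent s) \<and> w \<notin> ltodo s))"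

definition children_ok :: "'v conf \<Rightarrow> bool" where
  "children_ok c \<longleftrightarrow> (\<forall>u\<in>V. children_ok_at u (loc c u))"

definition counts_ok :: "'v conf \<Rightarrow> bool" where
  "counts_ok c \<longleftrightarrow> (\<forall>u\<in>V. count_ok_at (loc c u))"

definition explore_ok :: "'v conf \<Rightarrow> bool" where
  "explore_ok c \<longleftrightarrow> (\<forall>u\<in>V. explore_ok_at u (loc c u))"

text \<open>With \<open>waits_on_child\<close>, the exploring nodes form a single tree path from the root: the
  stack of nested Explore calls.\<close>

definition explore_chain :: "'v conf \<Rightarrow> bool" where
  "explore_chain c \<longleftrightarrow> (\<forall>x\<in>V. status c x = EXPLORE \<and> x \<noteq> r \<longrightarrow>
     (\<exists>p. parent c x = Some p \<and> status c p = EXPLORE \<and> waiting c p = Some x))"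

definition channels_ok :: "'v conf \<Rightarrow> bool" where
  "channels_ok c \<longleftrightarrow> (\<forall>x y. 0 < chan c (x, y) \<longrightarrow> chan c (x, y) = 1 \<and> x \<in> V \<and> y \<in> V \<and>
     ((status c x = EXPLORE \<and> waiting c x = Some y \<and> status c y \<noteq> EXPLORE) \<or>
      (status c y = EXPLORE \<and> waiting c y = Some x \<and> status c x \<noteq> EXPLORE)))"

definition one_message :: "'v conf \<Rightarrow> bool" where
  "one_message c \<longleftrightarrow> (\<forall>e e'. 0 < chan c e \<and> 0 < chan c e' \<longrightarrow> e = e')"

definition waits_on_child :: "'v conf \<Rightarrow> bool" where
  "waits_on_child c \<longleftrightarrow> (\<forall>x\<in>V. \<forall>w.
     status c x = EXPLORE \<and> waiting c x = Some w \<and> status c w = EXPLORE \<longrightarrow> parent c w = Some x)"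

text \<open>\<open>control_ok (Some u) c\<close> holds in the middle of an atomic step, while \<open>u\<close> runs the local
  code of Explore; \<open>control_ok None c\<close> holds between steps, when every exploring node waits
  for an exploring node or for a message in transit.\<close>

definition control_ok :: "'v option \<Rightarrow> 'v conf \<Rightarrow> bool" where
  "control_ok a c \<longleftrightarrow> (case a of
      None \<Rightarrow> (\<forall>x\<in>V. status c x = EXPLORE \<longrightarrow> (\<exists>w. waiting c x = Some w \<and>
                 (status c w = EXPLORE \<or> 0 < chan c (x, w) \<or> 0 < chan c (w, x))))
    | Some u \<Rightarrow> u \<in> V \<and> status c u = EXPLORE \<and> waiting c u = None \<and> (\<forall>e. chan c e = 0) \<and>
        (\<forall>x\<in>V. status c x = EXPLORE \<and> x \<noteq> u \<longrightarrow> (\<exists>w. waiting c x = Some w \<and> status c w = EXPLORE)))"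

text \<open>Along a tree edge from \<open>x\<close> to its child \<open>y\<close>, the child lags one exploration behind, or
  two while the current exploration of \<open>x\<close> has not reached \<open>y\<close>; the dummy exploration of
  the last round does not increment counts.\<close>

definition count_rel :: "'v conf \<Rightarrow> 'v \<Rightarrow> 'v \<Rightarrow> bool" where
  "count_rel c x y \<longleftrightarrow>
     (status c x = IDLE \<longrightarrow> count c y + 1 = count c x) \<and> (status c x = DONE \<longrightarrow> count c y = n - 1) \<and>
     (status c x = EXPLORE \<and> \<not> dummy c x \<longrightarrow>
        (if pending c x y then count c y + 2 = count c x else count c y + 1 = count c x)) \<and>
     (status c x = EXPLORE \<and> dummy c x \<longrightarrow>
        (if pending c x y then count c y + 1 = n - 1 else count c y = n - 1))"

definition parent_counts :: "'v conf \<Rightarrow> bool" where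
  "parent_counts c \<longleftrightarrow> (\<forall>y\<in>V. \<forall>x. parent c y = Some x \<longrightarrow> count_rel c x y)"

definition init_deep :: "'v conf \<Rightarrow> bool" where
  "init_deep c \<longleftrightarrow> (\<forall>u\<in>V. status c u = INIT \<longrightarrow> count c r \<le> d u)"

definition joined_in_last_round :: "'v conf \<Rightarrow> bool" where
  "joined_in_last_round c \<longleftrightarrow>
     ((\<exists>x\<in>V. (status c x = EXPLORE \<and> dummy c x) \<or> status c x = DONE) \<longrightarrow> (\<forall>u\<in>V. status c u \<noteq> INIT))"

definition probed_joined :: "'v conf \<Rightarrow> bool" where
  "probed_joined c \<longleftrightarrow> (\<forall>x\<in>V. \<forall>w\<in>N x. probed c x w \<longrightarrow> status c w \<noteq> INIT)"

text \<open>A non-child neighbour leaves the children set when its first probe arrives (MarkSibling).\<close>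

definition children_exact :: "'v conf \<Rightarrow> bool" where
  "children_exact c \<longleftrightarrow> (\<forall>x\<in>V. status c x \<noteq> INIT \<longrightarrow> (\<forall>w\<in>N x - set_option (parent c x).
     w \<in> children c x \<longleftrightarrow> (parent c w = Some x \<or> \<not> probed c w x)))"

text \<open>\<open>reserve c u\<close> bounds the messages that the current exploration of \<open>u\<close> will still cause
  (three per probe: the probe, the reply, and the forwarding to the parent); each exploration
  of \<open>u\<close> is paid for in advance when \<open>count c u\<close> is incremented.\<close>

definition reserve :: "'v conf \<Rightarrow> 'v \<Rightarrow> nat" where
  "reserve c u = (if status c u = EXPLORE then
     3 * card (todo c u) + (if dummy c u then 0 else 3 * card (children c u)) + 2 +
     (case waiting c u of None \<Rightarrow> 0 | Some w \<Rightarrow> 2 * chan c (u, w) + chan c (w, u)) else 0)"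

definition budget :: "'v conf \<Rightarrow> nat" where
  "budget c = (\<Sum>u\<in>V. (6 * card (N u) + 2) * count c u)"

definition message_budget :: "'v conf \<Rightarrow> bool" where
  "message_budget c \<longleftrightarrow> nsent c + (\<Sum>u\<in>V. reserve c u) \<le> budget c"

definition invariant :: "'v option \<Rightarrow> 'v conf \<Rightarrow> bool" where
  "invariant a c \<longleftrightarrow> root_ok c \<and> parents_ok c \<and> children_ok c \<and> counts_ok c \<and> explore_ok c \<and>
     explore_chain c \<and> channels_ok c \<and> one_message c \<and> waits_on_child c \<and> control_ok a c \<and>
     parent_counts c \<and> init_deep c \<and> joined_in_last_round c \<and> probed_joined c \<and>
     children_exact c \<and> message_budget c"

lemma ball_update_local:
  "(\<forall>x\<in>V. P x (loc c x)) \<Longrightarrow> (\<And>x. x \<in> V \<Longrightarrow> x \<noteq> u \<Longrightarrow> loc c' x = loc c x) \<Longrightarrow>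
    (u \<in> V \<Longrightarrow> P u (loc c' u)) \<Longrightarrow> \<forall>x\<in>V. P x (loc c' x)"
  by metis

lemma count_rel_cong:
  "status c' x = status c x \<Longrightarrow> dummy c' x = dummy c x \<Longrightarrow> count c' x = count c x \<Longrightarrow>
    count c' y = count c y \<Longrightarrow> pending c' x y = pending c x y \<Longrightarrow> count_rel c' x y = count_rel c x y"
  unfolding count_rel_def by simp

lemma count_relD: "invariant a c \<Longrightarrow> y \<in> V \<Longrightarrow> parent c y = Some x \<Longrightarrow> count_rel c x y"
  unfolding invariant_def parent_counts_def by blast

lemma invariantD:
  assumes "invariant a c"
  shows invariant_root_ok: "root_ok c"
    and invariant_parents_ok: "parents_ok c"
    and invariant_children_ok: "children_ok c"
    and invariant_counts_ok: "counts_ok c"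
    and invariant_explore_ok: "explore_ok c"
    and invariant_explore_chain: "explore_chain c"
    and invariant_channels_ok: "channels_ok c"
    and invariant_one_message: "one_message c"
    and invariant_waits_on_child: "waits_on_child c"
    and invariant_control_ok: "control_ok a c"
    and invariant_parent_counts: "parent_counts c"
    and invariant_init_deep: "init_deep c"
    and invariant_joined_in_last_round: "joined_in_last_round c"
    and invariant_probed_joined: "probed_joined c"
    and invariant_children_exact: "children_exact c"
    and invariant_message_budget: "message_budget c"
  using assms unfolding invariant_def by auto

lemma parent_facts:
  "invariant a c \<Longrightarrow> u \<in> V \<Longrightarrow> parent c u = Some p \<Longrightarrow>
    (u, p) \<in> E \<and> d p + 1 = d u \<and> status c p \<noteq> INIT \<and> p \<in> V"
  using invariant_parents_ok unfolding parents_ok_def using edge_in_V2 by blast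

lemma parent_exists:
  "invariant a c \<Longrightarrow> u \<in> V \<Longrightarrow> u \<noteq> r \<Longrightarrow> status c u \<noteq> INIT \<Longrightarrow> \<exists>p. parent c u = Some p"
  using invariant_parents_ok unfolding parents_ok_def by auto

lemma root_facts: "invariant a c \<Longrightarrow> status c r \<noteq> INIT \<and> parent c r = None"
  using invariant_root_ok unfolding root_ok_def by auto

lemma explore_chainD:
  "invariant a c \<Longrightarrow> x \<in> V \<Longrightarrow> status c x = EXPLORE \<Longrightarrow> x \<noteq> r \<Longrightarrow>
    \<exists>p. parent c x = Some p \<and> status c p = EXPLORE \<and> waiting c p = Some x"
  using invariant_explore_chain unfolding explore_chain_def by blast

lemma root_waits_on_exploring:
  assumes inv: "invariant a c"
  shows "x \<in> V \<Longrightarrow> status c x = EXPLORE \<Longrightarrow> x \<noteq> r \<Longrightarrow>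
    \<exists>y\<in>V. status c y = EXPLORE \<and> parent c y = Some r \<and> waiting c r = Some y"
proof (induct x rule: depth_induct)
  case (step x)
  obtain p where p: "parent c x = Some p" "status c p = EXPLORE" "waiting c p = Some x"
    using explore_chainD[OF inv] step by blast
  have pp: "d p + 1 = d x" "p \<in> V" using parent_facts[OF inv step(1) p(1)] by auto
  show ?case
  proof (cases "p = r")
    case True thus ?thesis using p step by auto
  next
    case False thus ?thesis using step(2)[OF pp(2)] pp p by auto
  qed
qed

lemma root_explores: "invariant a c \<Longrightarrow> x \<in> V \<Longrightarrow> status c x = EXPLORE \<Longrightarrow> status c r = EXPLORE"
proof (cases "x = r")
  case False
  assume inv: "invariant a c" and x: "x \<in> V" "status c x = EXPLORE"
  then obtain y where y: "y \<in> V" "status c y = EXPLORE" "parent c y = Some r"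
    using root_waits_on_exploring[OF inv] False by blast
  have "y \<noteq> r" using root_facts[OF inv] y by auto
  then obtain p where "parent c y = Some p" "status c p = EXPLORE"
    using explore_chainD[OF inv y(1,2)] by blast
  thus ?thesis using y by simp
qed simp

lemma exploring_unique_at_depth:
  assumes inv: "invariant a c"
  shows "x \<in> V \<Longrightarrow> y \<in> V \<Longrightarrow> status c x = EXPLORE \<Longrightarrow> status c y = EXPLORE \<Longrightarrow> d x = d y \<Longrightarrow>
    x = y"
proof (induct x arbitrary: y rule: depth_induct)
  case (step x)
  show ?case
  proof (cases "x = r")
    case True hence "d y = 0" using step(6) by simp
    thus ?thesis using d_eq_0_root[OF step(3)] True by simp
  next
    case False
    have "y \<noteq> r"
    proof
      assume "y = r" hence "d x = 0" using step(6) by simp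
      thus False using d_eq_0_root[OF step(1)] False by simp
    qed
    obtain p where p: "parent c x = Some p" "status c p = EXPLORE" "waiting c p = Some x"
      using explore_chainD[OF inv] step False by blast
    obtain q where q: "parent c y = Some q" "status c q = EXPLORE" "waiting c q = Some y"
      using explore_chainD[OF inv] step \<open>y \<noteq> r\<close> by blast
    have pp: "d p + 1 = d x" "p \<in> V" using parent_facts[OF inv step(1) p(1)] by auto
    have qq: "d q + 1 = d y" "q \<in> V" using parent_facts[OF inv step(3) q(1)] by auto
    have "p = q" using step(2)[OF pp(2) _ qq(2) p(2) q(2)] pp qq step(6) by simp
    thus ?thesis using p q by simp
  qed
qed

lemma not_pending_of_exploring:
  assumes inv: "invariant a c" and x: "x \<in> V" "status c x = EXPLORE"
    and p: "p \<in> V" "status c p = EXPLORE" "waiting c p = Some x"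
  shows "\<not> pending c p x"
proof -
  have "x \<notin> todo c p"
    using invariant_explore_ok[OF inv] p unfolding explore_ok_def explore_ok_at_def by blast
  moreover have "\<not> 0 < chan c (p, x)"
    using invariant_channels_ok[OF inv] x(2) p(2) unfolding channels_ok_def by blast
  ultimately show ?thesis by (simp add: pending_def)
qed

lemma explore_stack_count:
  assumes inv: "invariant a c" and nd: "\<not> (\<exists>y\<in>V. status c y = EXPLORE \<and> dummy c y)"
  shows "x \<in> V \<Longrightarrow> status c x = EXPLORE \<Longrightarrow> count c x + d x = count c r"
proof (induct x rule: depth_induct)
  case (step x)
  show ?case
  proof (cases "x = r")
    case True thus ?thesis by simp
  next
    case False
    obtain p where p: "parent c x = Some p" "status c p = EXPLORE" "waiting c p = Some x"
      using explore_chainD[OF inv] step False by blast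
    have pp: "d p + 1 = d x" "p \<in> V" using parent_facts[OF inv step(1) p(1)] by auto
    have np: "\<not> pending c p x" using not_pending_of_exploring[OF inv step(1,3) pp(2) p(2,3)] .
    have "\<not> dummy c p" using nd p pp by blast
    hence "count c x + 1 = count c p" using invariant_parent_counts[OF inv] step(1) p np
      unfolding parent_counts_def count_rel_def by auto
    moreover have "count c p + d p = count c r" using step(2)[OF pp(2) _ p(2)] pp by simp
    ultimately show ?thesis using pp by simp
  qed
qed

text \<open>A configuration where no node is \<open>DONE\<close>, only the root may explore, and the root's
  children all lag one exploration behind: counts then decrease by one per level of the
  tree, so every joined node at depth below the root's count has completed its first
  exploration and has probed all its neighbours.\<close>

context
  fixes a c
  assumes inv: "invariant a c" and no_done: "\<forall>x\<in>V. status c x \<noteq> DONE"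
    and only_root_explores: "\<forall>x\<in>V. status c x = EXPLORE \<longrightarrow> x = r"
    and root_children_lag: "\<forall>y\<in>V. parent c y = Some r \<longrightarrow> count c y + 1 = count c r"
begin

lemma quiescent_count_depth: "v \<in> V \<Longrightarrow> status c v \<noteq> INIT \<Longrightarrow> count c v + d v = count c r"
proof (induct v rule: depth_induct)
  case (step v)
  show ?case
  proof (cases "v = r")
    case True thus ?thesis by simp
  next
    case False
    obtain p where p: "parent c v = Some p" using parent_exists[OF inv step(1) False step(3)]
      by blast
    have pp: "(v, p) \<in> E" "d p + 1 = d v" "status c p \<noteq> INIT" "p \<in> V"
      using parent_facts[OF inv step(1) p] by auto
    show ?thesis
    proof (cases "p = r")
      case True thus ?thesis using root_children_lag step(1) p pp by auto
    next
      case False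
      hence "status c p = IDLE" using no_done only_root_explores pp by (cases "status c p") auto
      hence "count c v + 1 = count c p"
        using invariant_parent_counts[OF inv] step(1) p unfolding parent_counts_def count_rel_def
          by auto
      moreover have "count c p + d p = count c r" using step(2)[OF pp(4)] pp by auto
      ultimately show ?thesis using pp by simp
    qed
  qed
qed

lemma quiescent_joined:
  assumes root_probes_done: "\<forall>w. status c r = EXPLORE \<longrightarrow> \<not> pending c r w"
  shows "u \<in> V \<Longrightarrow> d u \<le> count c r \<Longrightarrow> status c u \<noteq> INIT"
proof (induct "d u" arbitrary: u)
  case 0 thus ?case using root_facts[OF inv] d_eq_0_root by metis
next
  case (Suc k)
  hence "u \<noteq> r" by auto
  then obtain p where p: "(p, u) \<in> E" "d p + 1 = d u" using d_predecessor Suc(3) by blast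
  have pV: "p \<in> V" using edge_in_V1 p by blast
  have "status c p \<noteq> INIT" using Suc pV p by auto
  hence cp: "count c p + d p = count c r" using quiescent_count_depth[OF pV] by simp
  have "probed c p u"
  proof (cases "p = r")
    case True thus ?thesis using root_probes_done Suc(2,4) unfolding probed_def by auto
  next
    case False
    hence "status c p \<noteq> EXPLORE" using only_root_explores pV by blast
    thus ?thesis using cp p Suc(2,4) unfolding probed_def by auto
  qed
  thus "status c u \<noteq> INIT"
    using invariant_probed_joined[OF inv] pV p unfolding probed_joined_def by (auto simp: in_N_iff)
qed

end

lemma invariant_init: "invariant None (init_conf E r)"
proof -
  let ?c = "init_conf E r"
  have init: "loc ?c = (\<lambda>u. if u = r
                then \<lparr>lstatus = IDLE, lparent = None, lchildren = nbrs E r, lcount = 0,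
                      ltodo = {}, lwait = None, ldummy = False\<rparr>
                else \<lparr>lstatus = INIT, lparent = None, lchildren = {}, lcount = 0,
                      ltodo = {}, lwait = None, ldummy = False\<rparr>)" "chan ?c = (\<lambda>_. 0)" "nsent ?c = 0"
    by (simp_all add: init_conf_def)
  have "reserve ?c u = 0" for u by (simp add: reserve_def init)
  thus ?thesis
    using two_nodes edge_irrefl
    unfolding invariant_def root_ok_def parents_ok_def children_ok_def counts_ok_def explore_ok_def
      explore_chain_def channels_ok_def one_message_def waits_on_child_def control_ok_def
      children_ok_at_def count_ok_at_def explore_ok_at_def parent_counts_def init_deep_def
      joined_in_last_round_def probed_joined_def children_exact_def message_budget_def budget_def
      probed_def
    by (simp add: init nbrs_def)
qed

lemma chan_single:
  "invariant None c \<Longrightarrow> 0 < chan c (v, u) \<Longrightarrow> chan c = (\<lambda>e. if e = (v, u) then 1 else 0)"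
proof
  fix e assume inv: "invariant None c" and m: "0 < chan c (v, u)"
  show "chan c e = (if e = (v, u) then 1 else 0)"
  proof (cases "e = (v, u)")
    case True thus ?thesis using invariant_channels_ok[OF inv] m unfolding channels_ok_def by auto
  next
    case False
    hence "\<not> 0 < chan c e" using invariant_one_message[OF inv] m unfolding one_message_def
      by metis
    thus ?thesis using False by simp
  qed
qed

lemma message_cases:
  assumes inv: "invariant a c" and m: "0 < chan c (x, y)"
  shows "x \<in> V \<and> y \<in> V \<and> (x, y) \<in> E \<and>
    ((status c x = EXPLORE \<and> waiting c x = Some y \<and> status c y \<noteq> EXPLORE \<and>
      y \<in> N x - set_option (parent c x)) \<or>
     (status c y = EXPLORE \<and> waiting c y = Some x \<and> status c x \<noteq> EXPLORE \<and>
      x \<in> N y - set_option (parent c y)))"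
proof -
  have "\<forall>u\<in>V. status c u = EXPLORE \<longrightarrow> (\<forall>w. waiting c u = Some w \<longrightarrow> w \<in> N u - set_option (parent c u))"
    using invariant_explore_ok[OF inv] unfolding explore_ok_def explore_ok_at_def by blast
  moreover have "x \<in> V \<and> y \<in> V \<and>
      ((status c x = EXPLORE \<and> waiting c x = Some y \<and> status c y \<noteq> EXPLORE) \<or>
       (status c y = EXPLORE \<and> waiting c y = Some x \<and> status c x \<noteq> EXPLORE))"
    using invariant_channels_ok[OF inv] m unfolding channels_ok_def by blast
  ultimately show ?thesis by (auto simp: in_N_iff dest: edge_sym)
qed

lemma budget_cong: "(\<And>u. u \<in> V \<Longrightarrow> count c' u = count c u) \<Longrightarrow> budget c' = budget c"
  unfolding budget_def by (intro sum.cong) auto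

lemma count_rel_cong_passive:
  "status c x \<noteq> EXPLORE \<Longrightarrow> status c' x = status c x \<Longrightarrow> count c' x = count c x \<Longrightarrow>
    count c' y = count c y \<Longrightarrow> count_rel c' x y = count_rel c x y"
  unfolding count_rel_def by simp

lemma no_explore_no_chan: "invariant a c \<Longrightarrow> status c r \<noteq> EXPLORE \<Longrightarrow> chan c e = 0"
proof (rule ccontr)
  assume inv: "invariant a c" and s: "status c r \<noteq> EXPLORE" and "chan c e \<noteq> 0"
  then obtain x y where e: "e = (x, y)" "0 < chan c (x, y)" by (cases e) auto
  hence "x \<in> V" "y \<in> V" "status c x = EXPLORE \<or> status c y = EXPLORE"
    using message_cases[OF inv] by blast+
  thus False using root_explores[OF inv] s by blast
qed

lemma no_2cycle: "invariant a c \<Longrightarrow> y \<in> V \<Longrightarrow> u \<in> V \<Longrightarrow> parent c y = Some u \<Longrightarrow> parent c u \<noteq> Some y"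
  using parent_facts[of a c y u] parent_facts[of a c u y] by auto

lemma active_facts:
  "invariant (Some u) c \<Longrightarrow> u \<in> V \<and> status c u = EXPLORE \<and> waiting c u = None \<and> (\<forall>e. chan c e = 0) \<and>
    (\<forall>x\<in>V. status c x = EXPLORE \<and> x \<noteq> u \<longrightarrow> (\<exists>w. waiting c x = Some w \<and> status c w = EXPLORE))"
  using invariant_control_ok[of "Some u" c] unfolding control_ok_def by simp

lemma active_exp: "invariant (Some u) c \<Longrightarrow> explore_ok_at u (loc c u)"
proof -
  assume inv: "invariant (Some u) c"
  thus ?thesis using invariant_explore_ok[OF inv] active_facts[OF inv] unfolding explore_ok_def
    by blast
qed

lemma active_nbr_not_explore:
  assumes inv: "invariant (Some u) c" and w: "w \<in> N u - set_option (parent c u)"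
  shows "status c w \<noteq> EXPLORE"
proof
  assume ew: "status c w = EXPLORE"
  have A: "u \<in> V" "status c u = EXPLORE" "waiting c u = None" using active_facts[OF inv] by auto
  have e: "(u, w) \<in> E" using w by (simp add: in_N_iff)
  hence wV: "w \<in> V" using edge_in_V2 by blast
  have d1: "d w \<le> d u + 1" "d u \<le> d w + 1" using d_edge_le e edge_sym by blast+
  consider "d w = d u" | "d w + 1 = d u" | "d w = d u + 1" using d1 by linarith
  thus False
  proof cases
    case 1 thus False using exploring_unique_at_depth[OF inv wV A(1) ew A(2)] e edge_irrefl by auto
  next
    case 2
    hence u_ne_r: "u \<noteq> r" by auto
    then obtain p where p: "parent c u = Some p" "status c p = EXPLORE"
      using explore_chainD[OF inv A(1,2)] by blast
    have "d p + 1 = d u" "p \<in> V" using parent_facts[OF inv A(1) p(1)] by auto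
    hence "p = w" using exploring_unique_at_depth[OF inv _ wV p(2) ew] 2 by auto
    thus False using w p by auto
  next
    case 3
    hence wr: "w \<noteq> r" by auto
    then obtain q where q: "parent c w = Some q" "status c q = EXPLORE" "waiting c q = Some w"
      using explore_chainD[OF inv wV ew] by blast
    have "d q + 1 = d w" "q \<in> V" using parent_facts[OF inv wV q(1)] by auto
    hence "q = u" using exploring_unique_at_depth[OF inv _ A(1) q(2) A(2)] 3 by auto
    thus False using q A by auto
  qed
qed

definition finish_state :: "'v conf \<Rightarrow> 'v \<Rightarrow> 'v lstate" where
  "finish_state c u = (loc c u)\<lparr>lstatus := (if lcount (loc c u) = n - 1 then DONE else IDLE)\<rparr>"

end

section \<open>Preservation of the invariant\<close>

locale set_parent_step = bfs V E r for V :: "'v set" and E r +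
  fixes c :: "'v conf" and v u :: 'v
  assumes inv: "invariant None c" and msg: "0 < chan c (v, u)" and init: "status c u = INIT"
begin

definition c' :: "'v conf" where
  "c' = send (setl (recv c v u) u ((loc c u)\<lparr>lstatus := IDLE, lparent := Some v,
                     lchildren := N u - {v}, lcount := 0\<rparr>)) u v"

lemma msg_facts: "u \<in> V" "v \<in> V" "(v, u) \<in> E" "status c v = EXPLORE" "waiting c v = Some u"
  "u \<in> N v - set_option (parent c v)"
  using message_cases[OF inv msg] init by auto

lemma u_ne_r: "u \<noteq> r" using root_facts[OF inv] init by auto

lemma v_ne_u: "v \<noteq> u" using msg_facts(3) edge_irrefl by auto

lemma chan_c: "chan c = (\<lambda>e. if e = (v, u) then 1 else 0)" using chan_single[OF inv msg] .

lemma conf': "loc c' = (loc c)(u := (loc c u)\<lparr>lstatus := IDLE, lparent := Some v, lchildren := N u - {v}, lcount := 0\<rparr>)"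
  "chan c' = (\<lambda>e. if e = (u, v) then 1 else 0)" "nsent c' = Suc (nsent c)"
  unfolding c'_def using v_ne_u by (auto simp: chan_c)

lemma count_u: "count c u = 0" using invariant_counts_ok[OF inv] msg_facts(1) init
  unfolding counts_ok_def count_ok_at_def by auto

lemma pending_v_u: "pending c v u" using msg_facts chan_c by (simp add: pending_def)

lemma first_exploration_v: "count c v = 1" "\<not> dummy c v"
proof -
  have "\<not> probed c v u"
    using invariant_probed_joined[OF inv] msg_facts init unfolding probed_joined_def by auto
  moreover have "1 \<le> count c v"
    using invariant_counts_ok[OF inv] msg_facts unfolding counts_ok_def count_ok_at_def by auto
  ultimately show "count c v = 1" "\<not> dummy c v"
    using pending_v_u msg_facts(4) unfolding probed_def by auto
qed

lemma not_last_round: "\<not> (\<exists>x\<in>V. (status c x = EXPLORE \<and> dummy c x) \<or> status c x = DONE)"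
  using invariant_joined_in_last_round[OF inv] msg_facts(1) init unfolding joined_in_last_round_def
    by blast

text \<open>The probe comes from the first exploration of \<open>v\<close>, so the root is in round \<open>d v + 1\<close>;
  nodes still \<open>INIT\<close> in that round are at distance at least \<open>d v + 1\<close>.\<close>

lemma d_u: "d v + 1 = d u"
proof -
  have "count c v + d v = count c r"
    using explore_stack_count[OF inv _ msg_facts(2,4)] not_last_round by blast
  moreover have "count c r \<le> d u" using invariant_init_deep[OF inv] msg_facts(1) init
    unfolding init_deep_def by blast
  moreover have "d u \<le> d v + 1" using d_edge_le msg_facts(3) by blast
  ultimately show ?thesis using first_exploration_v by simp
qed

lemma u_notin_todo_v: "u \<notin> todo c v" using invariant_explore_ok[OF inv] msg_facts
  unfolding explore_ok_def explore_ok_at_def by blast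

lemma pending': "x \<noteq> u \<Longrightarrow> pending c' x y = (pending c x y \<and> \<not> (x = v \<and> y = u))" for x y
  using u_notin_todo_v msg_facts(5) by (auto simp: pending_def conf' chan_c)

lemma probed': "probed c' x y = (probed c x y \<or> (x = v \<and> y = u))" for x y
proof (cases "x = u")
  case True thus ?thesis using count_u v_ne_u by (simp add: probed_def conf')
next
  case False
  have e: "status c' x = status c x" "count c' x = count c x" "dummy c' x = dummy c x" using False
    by (simp_all add: conf')
  show ?thesis
  proof (cases "x = v")
    case True thus ?thesis using pending'[OF False] first_exploration_v msg_facts(4) e
      by (auto simp: probed_def)
  next
    case False thus ?thesis using pending'[OF \<open>x \<noteq> u\<close>] e
      by (simp add: probed_def)
  qed
qed

lemma root_ok_after: "root_ok c'" using invariant_root_ok[OF inv] u_ne_r unfolding root_ok_def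
  by (simp add: conf')

lemma parents_ok_after: "parents_ok c'"
proof -
  have a: "status c' x = INIT \<longleftrightarrow> parent c' x = None" if "x \<in> V" "x \<noteq> r" for x
    using invariant_parents_ok[OF inv] that unfolding parents_ok_def by (auto simp: conf')
  have b: "(x, p) \<in> E \<and> d p + 1 = d x \<and> status c' p \<noteq> INIT" if x: "x \<in> V"
    and p: "parent c' x = Some p" for x p
  proof (cases "x = u")
    case True
    hence "p = v" using p by (simp add: conf')
    thus ?thesis using True msg_facts d_u v_ne_u by (simp add: conf' edge_sym)
  next
    case False
    hence "(x, p) \<in> E \<and> d p + 1 = d x \<and> status c p \<noteq> INIT"
      using parent_facts[OF inv x] p by (auto simp: conf')
    thus ?thesis by (auto simp: conf')
  qed
  show ?thesis unfolding parents_ok_def using a b by blast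
qed

lemma children_ok_after: "children_ok c'" using invariant_children_ok[OF inv]
  unfolding children_ok_def
  by (rule ball_update_local[where u = u]) (auto simp: conf' children_ok_at_def)

lemma counts_ok_after: "counts_ok c'" using invariant_counts_ok[OF inv] unfolding counts_ok_def
  by (rule ball_update_local[where u = u]) (use n_minus_1_pos in \<open>auto simp: conf' count_ok_at_def\<close>)

lemma explore_ok_after: "explore_ok c'" using invariant_explore_ok[OF inv] unfolding explore_ok_def
  by (rule ball_update_local[where u = u]) (auto simp: conf' explore_ok_at_def)

lemma explore_chain_after: "explore_chain c'" unfolding explore_chain_def
proof (intro ballI impI)
  fix x assume x: "x \<in> V" "status c' x = EXPLORE \<and> x \<noteq> r"
  hence xu: "x \<noteq> u" by (auto simp: conf')
  then obtain p where "parent c x = Some p" "status c p = EXPLORE" "waiting c p = Some x"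
    using explore_chainD[OF inv] x by (auto simp: conf')
  moreover have "p \<noteq> u" using calculation init by auto
  ultimately show "\<exists>p. parent c' x = Some p \<and> status c' p = EXPLORE \<and> waiting c' p = Some x"
    using xu by (auto simp: conf')
qed

lemma channels_ok_after: "channels_ok c'" unfolding channels_ok_def using msg_facts v_ne_u
  by (auto simp: conf')

lemma one_message_after: "one_message c'" unfolding one_message_def
  by (auto simp: conf' split: if_splits)

lemma waits_on_child_after: "waits_on_child c'" using invariant_waits_on_child[OF inv]
  unfolding waits_on_child_def by (auto simp: conf')

lemma control_ok_after: "control_ok None c'" unfolding control_ok_def
proof (simp, intro ballI impI)
  fix x assume x: "x \<in> V" "status c' x = EXPLORE"
  hence xu: "x \<noteq> u" by (auto simp: conf')
  obtain w where w: "waiting c x = Some w"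
    "status c w = EXPLORE \<or> 0 < chan c (x, w) \<or> 0 < chan c (w, x)"
    using invariant_control_ok[OF inv] x xu unfolding control_ok_def by (auto simp: conf')
  show
    "\<exists>w. waiting c' x = Some w \<and> (status c' w = EXPLORE \<or> 0 < chan c' (x, w) \<or> 0 < chan c' (w, x))"
    using w xu init by (auto simp: conf' chan_c split: if_splits)
qed

lemma parent_counts_after: "parent_counts c'" unfolding parent_counts_def
proof (intro ballI allI impI)
  fix y x assume y: "y \<in> V" and p: "parent c' y = Some x"
  show "count_rel c' x y"
  proof (cases "y = u")
    case True
    hence "x = v" using p by (simp add: conf')
    thus ?thesis using True pending'[of v u] v_ne_u first_exploration_v msg_facts
      by (simp add: conf' count_rel_def)
  next
    case False
    hence p0: "parent c y = Some x" using p by (simp add: conf')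
    hence "x \<noteq> u" using parent_facts[OF inv y p0] init by auto
    hence "count_rel c' x y = count_rel c x y" using pending'[of x y] False
      by (intro count_rel_cong) (auto simp: conf')
    thus ?thesis using count_relD[OF inv y p0] by simp
  qed
qed

lemma init_deep_after: "init_deep c'" using invariant_init_deep[OF inv] u_ne_r
  unfolding init_deep_def by (auto simp: conf')

lemma joined_in_last_round_after: "joined_in_last_round c'" using not_last_round v_ne_u
  unfolding joined_in_last_round_def by (auto simp: conf')

lemma probed_joined_after: "probed_joined c'" using invariant_probed_joined[OF inv]
  unfolding probed_joined_def by (auto simp: probed' conf')

lemma children_exact_after: "children_exact c'" unfolding children_exact_def
proof (intro ballI impI)
  fix x w assume x: "x \<in> V" "status c' x \<noteq> INIT" and w: "w \<in> N x - set_option (parent c' x)"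
  show "w \<in> children c' x \<longleftrightarrow> (parent c' w = Some x \<or> \<not> probed c' w x)"
  proof (cases "x = u")
    case True
    have "w \<noteq> v" "w \<noteq> u" using w True edge_irrefl by (auto simp: conf' in_N_iff)
    moreover have "\<not> probed c w u"
    proof -
      have "(u, w) \<in> E" using w True by (simp add: in_N_iff)
      hence "w \<in> V" "u \<in> N w" using edge_in_V2 edge_sym by (auto simp: in_N_iff)
      thus ?thesis using invariant_probed_joined[OF inv] init unfolding probed_joined_def by blast
    qed
    ultimately show ?thesis using True w by (simp add: probed' conf')
  next
    case False
    have x0: "status c x \<noteq> INIT" using x False by (simp add: conf')
    show ?thesis
    proof (cases "w = u")
      case True
      have "u \<in> children c x"
        using invariant_children_exact[OF inv] x(1) x0 w True False init count_u
        unfolding children_exact_def by (auto simp: conf' probed_def)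
      thus ?thesis using True False count_u by (auto simp: conf' probed_def)
    next
      case False
      thus ?thesis using invariant_children_exact[OF inv] x(1) x0 w \<open>x \<noteq> u\<close>
        unfolding children_exact_def by (auto simp: conf' probed')
    qed
  qed
qed

lemma message_budget_after: "message_budget c'"
proof -
  have r1: "reserve c' z = reserve c z" if "z \<in> V" "z \<noteq> v" for z
  proof (cases "z = u")
    case True thus ?thesis using init by (simp add: reserve_def conf')
  next
    case False thus ?thesis using that by (auto simp: reserve_def conf' chan_c split: option.splits)
  qed
  have r2: "reserve c v = reserve c' v + 1" using msg_facts v_ne_u
    by (simp add: reserve_def conf' chan_c)
  have "sum (reserve c') V + reserve c v = sum (reserve c) V + reserve c' v"
    by (rule sum_eq_off_point[OF finite_V msg_facts(2)]) (rule r1)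
  moreover have "budget c' = budget c" using count_u by (intro budget_cong) (auto simp: conf')
  ultimately show ?thesis using invariant_message_budget[OF inv] r2 unfolding message_budget_def
    by (simp add: conf')
qed

lemma invariant_after: "invariant None c'"
  unfolding invariant_def
  by (intro conjI
    root_ok_after parents_ok_after children_ok_after counts_ok_after explore_ok_after
    explore_chain_after channels_ok_after one_message_after waits_on_child_after
    control_ok_after parent_counts_after init_deep_after joined_in_last_round_after
    probed_joined_after children_exact_after message_budget_after)

end

locale mark_sibling_step = bfs V E r for V :: "'v set" and E r +
  fixes c :: "'v conf" and v u :: 'v
  assumes inv: "invariant None c" and msg: "0 < chan c (v, u)"
      and idle_or_done: "status c u \<in> {IDLE, DONE}" and not_parent: "parent c u \<noteq> Some v"
begin

definition c' :: "'v conf" where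
  "c' = send (setl (recv c v u) u ((loc c u)\<lparr>lchildren := children c u - {v}\<rparr>)) u v"

lemma msg_facts: "u \<in> V" "v \<in> V" "(v, u) \<in> E" "status c v = EXPLORE" "waiting c v = Some u"
  "u \<in> N v - set_option (parent c v)"
  using message_cases[OF inv msg] idle_or_done by auto

lemma v_ne_u: "v \<noteq> u" using msg_facts(3) edge_irrefl by auto

lemma chan_c: "chan c = (\<lambda>e. if e = (v, u) then 1 else 0)" using chan_single[OF inv msg] .

lemma conf': "loc c' = (loc c)(u := (loc c u)\<lparr>lchildren := children c u - {v}\<rparr>)"
  "chan c' = (\<lambda>e. if e = (u, v) then 1 else 0)" "nsent c' = Suc (nsent c)"
  unfolding c'_def using v_ne_u by (auto simp: chan_c)

lemma same: "status c' x = status c x" "parent c' x = parent c x" "count c' x = count c x"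
  "todo c' x = todo c x" "waiting c' x = waiting c x"
  "dummy c' x = dummy c x" for x by (simp_all add: conf')

lemma status_u: "status c u \<noteq> EXPLORE" "status c u \<noteq> INIT" using idle_or_done by auto

lemma count_v_pos: "1 \<le> count c v" using invariant_counts_ok[OF inv] msg_facts
  unfolding counts_ok_def count_ok_at_def by auto

lemma u_notin_todo_v: "u \<notin> todo c v" using invariant_explore_ok[OF inv] msg_facts
  unfolding explore_ok_def explore_ok_at_def by blast

lemma pending': "x \<noteq> u \<Longrightarrow> pending c' x y = (pending c x y \<and> \<not> (x = v \<and> y = u))" for x y
  using u_notin_todo_v msg_facts(5) by (auto simp: pending_def conf' chan_c)

lemma probed': "probed c' x y = (probed c x y \<or> (x = v \<and> y = u))" for x y
proof (cases "x = u")
  case True thus ?thesis using status_u v_ne_u by (simp add: probed_def same)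
next
  case False
  show ?thesis
  proof (cases "x = v")
    case True thus ?thesis using pending'[OF False] count_v_pos msg_facts(4)
      by (auto simp: probed_def same)
  next
    case False thus ?thesis using pending'[OF \<open>x \<noteq> u\<close>]
      by (simp add: probed_def same)
  qed
qed

lemma root_ok_after: "root_ok c'" using invariant_root_ok[OF inv] unfolding root_ok_def
  by (simp add: same)

lemma parents_ok_after: "parents_ok c'" using invariant_parents_ok[OF inv] unfolding parents_ok_def
  by (simp add: same)

lemma children_ok_after: "children_ok c'"
proof -
  have "children_ok_at u (loc c u)" using invariant_children_ok[OF inv] msg_facts(1)
    unfolding children_ok_def by blast
  hence new: "children_ok_at u (loc c' u)" by (auto simp: conf' children_ok_at_def)
  show ?thesis using invariant_children_ok[OF inv] unfolding children_ok_def
    by (rule ball_update_local[where u = u]) (use new in \<open>auto simp: conf'\<close>)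
qed

lemma counts_ok_after: "counts_ok c'"
proof -
  have "count_ok_at (loc c u)" using invariant_counts_ok[OF inv] msg_facts(1)
    unfolding counts_ok_def by blast
  hence new: "count_ok_at (loc c' u)" by (simp add: conf' count_ok_at_def)
  show ?thesis using invariant_counts_ok[OF inv] unfolding counts_ok_def
    by (rule ball_update_local[where u = u]) (use new in \<open>auto simp: conf'\<close>)
qed

lemma explore_ok_after: "explore_ok c'" using invariant_explore_ok[OF inv] unfolding explore_ok_def
  by (rule ball_update_local[where u = u]) (use status_u in \<open>auto simp: conf' explore_ok_at_def\<close>)

lemma explore_chain_after: "explore_chain c'" using invariant_explore_chain[OF inv]
  unfolding explore_chain_def by (simp add: same)

lemma channels_ok_after: "channels_ok c'" unfolding channels_ok_def using msg_facts v_ne_u status_u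
  by (auto simp: conf')

lemma one_message_after: "one_message c'" unfolding one_message_def
  by (auto simp: conf' split: if_splits)

lemma waits_on_child_after: "waits_on_child c'" using invariant_waits_on_child[OF inv]
  unfolding waits_on_child_def by (simp add: same)

lemma control_ok_after: "control_ok None c'" unfolding control_ok_def
proof (simp, intro ballI impI)
  fix x assume x: "x \<in> V" "status c' x = EXPLORE"
  obtain w where w: "waiting c x = Some w"
    "status c w = EXPLORE \<or> 0 < chan c (x, w) \<or> 0 < chan c (w, x)"
    using invariant_control_ok[OF inv] x unfolding control_ok_def by (auto simp: same)
  show
    "\<exists>w. waiting c' x = Some w \<and> (status c' w = EXPLORE \<or> 0 < chan c' (x, w) \<or> 0 < chan c' (w, x))"
  proof (cases "status c w = EXPLORE")
    case True thus ?thesis using w(1) by (simp add: same)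
  next
    case False
    hence "(x, w) = (v, u) \<or> (w, x) = (v, u)" using w(2) by (simp add: chan_c split: if_splits)
    moreover have "x \<noteq> u" using x status_u by (auto simp: same)
    ultimately have "x = v" "w = u" by auto
    thus ?thesis using w(1) v_ne_u by (simp add: same conf')
  qed
qed

lemma parent_counts_after: "parent_counts c'" unfolding parent_counts_def
proof (intro ballI allI impI)
  fix y x assume y: "y \<in> V" and p: "parent c' y = Some x"
  hence p0: "parent c y = Some x" by (simp add: same)
  have "count_rel c' x y = count_rel c x y"
  proof (cases "x = u")
    case True thus ?thesis using status_u by (intro count_rel_cong_passive) (auto simp: same)
  next
    case False
    have "y \<noteq> u \<or> x \<noteq> v" using not_parent p0 by auto
    thus ?thesis using pending'[OF False] by (intro count_rel_cong) (auto simp: same)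
  qed
  thus "count_rel c' x y" using count_relD[OF inv y p0] by simp
qed

lemma init_deep_after: "init_deep c'" using invariant_init_deep[OF inv] unfolding init_deep_def
  by (simp add: same)

lemma joined_in_last_round_after: "joined_in_last_round c'"
  using invariant_joined_in_last_round[OF inv] unfolding joined_in_last_round_def
  by (simp add: same)

lemma probed_joined_after: "probed_joined c'" using invariant_probed_joined[OF inv] status_u
  unfolding probed_joined_def by (auto simp: probed' same)

lemma children_exact_after: "children_exact c'" unfolding children_exact_def
proof (intro ballI impI)
  fix x w assume x: "x \<in> V" "status c' x \<noteq> INIT" and w: "w \<in> N x - set_option (parent c' x)"
  have old: "w \<in> children c x \<longleftrightarrow> (parent c w = Some x \<or> \<not> probed c w x)"
    using invariant_children_exact[OF inv] x w unfolding children_exact_def by (auto simp: same)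
  show "w \<in> children c' x \<longleftrightarrow> (parent c' w = Some x \<or> \<not> probed c' w x)"
  proof (cases "x = u \<and> w = v")
    case True
    have "parent c v \<noteq> Some u" using msg_facts(6) by auto
    thus ?thesis using True v_ne_u by (simp add: conf' probed')
  next
    case False
    hence "children c' x = children c x \<or> (x = u \<and> w \<noteq> v)" by (auto simp: conf')
    thus ?thesis using old False by (auto simp: conf' probed' same)
  qed
qed

lemma message_budget_after: "message_budget c'"
proof -
  have r1: "reserve c' z = reserve c z" if "z \<in> V" "z \<noteq> v" for z
  proof (cases "z = u")
    case True thus ?thesis using status_u by (simp add: reserve_def same)
  next
    case False thus ?thesis using that by (auto simp: reserve_def conf' chan_c split: option.splits)
  qed
  have r2: "reserve c v = reserve c' v + 1" using msg_facts v_ne_u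
    by (simp add: reserve_def conf' chan_c)
  have "sum (reserve c') V + reserve c v = sum (reserve c) V + reserve c' v"
    by (rule sum_eq_off_point[OF finite_V msg_facts(2)]) (rule r1)
  moreover have "budget c' = budget c" by (intro budget_cong) (auto simp: same)
  ultimately show ?thesis using invariant_message_budget[OF inv] r2 unfolding message_budget_def
    by (simp add: conf')
qed

lemma invariant_after: "invariant None c'"
  unfolding invariant_def
  by (intro conjI
    root_ok_after parents_ok_after children_ok_after counts_ok_after explore_ok_after
    explore_chain_after channels_ok_after one_message_after waits_on_child_after
    control_ok_after parent_counts_after init_deep_after joined_in_last_round_after
    probed_joined_after children_exact_after message_budget_after)
end

locale root_invoke_step = bfs V E r for V :: "'v set" and E r +
  fixes c :: "'v conf"
  assumes inv: "invariant None c" and idle: "status c r = IDLE"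
begin

definition c' :: "'v conf" where
  "c' = setl c r (begin_explore (N r) (loc c r))"

lemma parent_r: "parent c r = None" using root_facts[OF inv] by simp

lemma nothing_explores: "x \<in> V \<Longrightarrow> status c x \<noteq> EXPLORE" for x
  using root_explores[OF inv] idle by fastforce

lemma chan_c: "chan c = (\<lambda>e. 0)" using no_explore_no_chan[OF inv] idle by auto

lemma conf': "loc c' = (loc c)(r := (loc c r)\<lparr>lstatus := EXPLORE, lcount := count c r + 1,
    ltodo := N r, lwait := None, ldummy := False\<rparr>)" "chan c' = (\<lambda>e. 0)" "nsent c' = nsent c"
  unfolding c'_def begin_explore_def using parent_r by (auto simp: chan_c)

lemma same: "x \<noteq> r \<Longrightarrow> loc c' x = loc c x" for x by (simp add: conf')

lemma count_ok_r: "count_ok_at (loc c r)" using invariant_counts_ok[OF inv] root_in_V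
  unfolding counts_ok_def by blast

lemma count_r_less: "count c r < n - 1" using count_ok_r idle unfolding count_ok_at_def by auto

lemma pending': "x \<noteq> r \<Longrightarrow> pending c' x y = pending c x y" for x y
  by (simp add: pending_def conf' chan_c)

lemma probed': "y \<in> N x \<Longrightarrow> probed c' x y = probed c x y" for x y
proof (cases "x = r")
  case True
  assume "y \<in> N x"
  thus ?thesis using True idle by (auto simp: probed_def conf' pending_def)
next
  case False thus ?thesis using pending'[OF False] by (simp add: probed_def same)
qed

lemma root_ok_after: "root_ok c'" using invariant_root_ok[OF inv] unfolding root_ok_def
  by (simp add: conf')

lemma parents_ok_after: "parents_ok c'" using invariant_parents_ok[OF inv] unfolding parents_ok_def
  by (auto simp: conf')

lemma children_ok_after: "children_ok c'" using invariant_children_ok[OF inv]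
  unfolding children_ok_def by (auto simp: conf' children_ok_at_def)

lemma counts_ok_after: "counts_ok c'"
proof -
  have new: "count_ok_at (loc c' r)" using count_r_less by (simp add: conf' count_ok_at_def)
  show ?thesis using invariant_counts_ok[OF inv] unfolding counts_ok_def
    by (rule ball_update_local[where u = r]) (use new in \<open>auto simp: conf'\<close>)
qed

lemma explore_ok_after: "explore_ok c'"
proof -
  have new: "explore_ok_at r (loc c' r)" using parent_r by (simp add: conf' explore_ok_at_def)
  show ?thesis using invariant_explore_ok[OF inv] unfolding explore_ok_def
    by (rule ball_update_local[where u = r]) (use new in \<open>auto simp: conf'\<close>)
qed

lemma explore_chain_after: "explore_chain c'" unfolding explore_chain_def using nothing_explores
  by (auto simp: conf')

lemma channels_ok_after: "channels_ok c'" unfolding channels_ok_def by (simp add: conf')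

lemma one_message_after: "one_message c'" unfolding one_message_def by (simp add: conf')

lemma waits_on_child_after: "waits_on_child c'" unfolding waits_on_child_def using nothing_explores
  by (auto simp: conf')

lemma control_ok_after: "control_ok (Some r) c'" unfolding control_ok_def
  using nothing_explores root_in_V by (auto simp: conf')

lemma parent_counts_after: "parent_counts c'" unfolding parent_counts_def
proof (intro ballI allI impI)
  fix y x assume y: "y \<in> V" and p: "parent c' y = Some x"
  have yr: "y \<noteq> r" using p parent_r by (auto simp: conf')
  hence p0: "parent c y = Some x" using p by (simp add: conf')
  have old: "count_rel c x y" using count_relD[OF inv y p0] .
  show "count_rel c' x y"
  proof (cases "x = r")
    case True
    have "(y, r) \<in> E" using parent_facts[OF inv y p0] True by simp
    hence "y \<in> N r" using edge_sym by (auto simp: in_N_iff)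
    thus ?thesis using old True idle yr by (simp add: count_rel_def conf' pending_def)
  next
    case False
    have "count_rel c' x y = count_rel c x y" using pending'[OF False] False yr
      by (intro count_rel_cong) (simp_all add: conf')
    thus ?thesis using old by simp
  qed
qed

lemma init_deep_after: "init_deep c'"
proof (cases "\<exists>x\<in>V. status c x = DONE")
  case True
  hence "\<forall>u\<in>V. status c u \<noteq> INIT" using invariant_joined_in_last_round[OF inv]
    unfolding joined_in_last_round_def by blast
  thus ?thesis unfolding init_deep_def by (auto simp: conf')
next
  case False
  have rc: "\<forall>y\<in>V. parent c y = Some r \<longrightarrow> count c y + 1 = count c r"
    using count_relD[OF inv] idle unfolding count_rel_def by auto
  have q: "u \<in> V \<Longrightarrow> d u \<le> count c r \<Longrightarrow> status c u \<noteq> INIT" for u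
    by (rule quiescent_joined[OF inv]) (use False nothing_explores rc idle in auto)
  show ?thesis unfolding init_deep_def
  proof (intro ballI impI)
    fix u assume u: "u \<in> V" "status c' u = INIT"
    hence "u \<noteq> r" "status c u = INIT" using idle by (auto simp: conf' split: if_splits)
    thus "count c' r \<le> d u" using q[OF u(1)] by (fastforce simp: conf')
  qed
qed

lemma joined_in_last_round_after: "joined_in_last_round c'"
  using invariant_joined_in_last_round[OF inv] idle unfolding joined_in_last_round_def
  by (auto simp: conf' split: if_splits)

lemma probed_joined_after: "probed_joined c'" unfolding probed_joined_def
proof (intro ballI impI)
  fix x w assume x: "x \<in> V" and w: "w \<in> N x" and se: "probed c' x w"
  have "probed c x w" using se probed'[OF w] by simp
  hence "status c w \<noteq> INIT" using invariant_probed_joined[OF inv] x w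
    unfolding probed_joined_def by blast
  thus "status c' w \<noteq> INIT" by (simp add: conf')
qed

lemma children_exact_after: "children_exact c'" unfolding children_exact_def
proof (intro ballI impI)
  fix x w assume x: "x \<in> V" "status c' x \<noteq> INIT" and w: "w \<in> N x - set_option (parent c' x)"
  have x0: "status c x \<noteq> INIT" using x idle by (cases "x = r") (auto simp: conf')
  have w0: "w \<in> N x - set_option (parent c x)" using w by (cases "x = r") (auto simp: conf')
  have "x \<in> N w" using w edge_sym by (auto simp: in_N_iff)
  hence "probed c' w x = probed c w x" by (rule probed')
  moreover have "children c' x = children c x" "parent c' w = parent c w" by (simp_all add: conf')
  ultimately show "w \<in> children c' x \<longleftrightarrow> (parent c' w = Some x \<or> \<not> probed c' w x)"
    using invariant_children_exact[OF inv] x(1) x0 w0 unfolding children_exact_def by simp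
qed

lemma message_budget_after: "message_budget c'"
proof -
  have r1: "reserve c' z = reserve c z" if "z \<in> V" "z \<noteq> r" for z using that
    by (simp add: reserve_def conf' chan_c split: option.splits)
  have r2: "reserve c r = 0" using idle by (simp add: reserve_def)
  have chN: "card (children c r) \<le> card (N r)"
    using invariant_children_ok[OF inv] root_in_V finite_N
      unfolding children_ok_def children_ok_at_def by (meson card_mono Diff_subset subset_trans)
  have r3: "reserve c' r = 3 * card (N r) + 3 * card (children c r) + 2"
    by (simp add: reserve_def conf')
  have "sum (reserve c') V + reserve c r = sum (reserve c) V + reserve c' r"
    by (rule sum_eq_off_point[OF finite_V root_in_V]) (rule r1)
  moreover have
    "budget c' + (6 * card (N r) + 2) * count c r = budget c + (6 * card (N r) + 2) * count c' r"
    unfolding budget_def by (rule sum_eq_off_point[OF finite_V root_in_V]) (simp add: conf')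
  ultimately show ?thesis using invariant_message_budget[OF inv] r2 r3 chN
    unfolding message_budget_def by (simp add: conf' algebra_simps)
qed

lemma invariant_after: "invariant (Some r) c'"
  unfolding invariant_def
  by (intro conjI
    root_ok_after parents_ok_after children_ok_after counts_ok_after explore_ok_after
    explore_chain_after channels_ok_after one_message_after waits_on_child_after
    control_ok_after parent_counts_after init_deep_after joined_in_last_round_after
    probed_joined_after children_exact_after message_budget_after)
end

locale explore_step = bfs V E r for V :: "'v set" and E r +
  fixes c :: "'v conf" and v u :: 'v
  assumes inv: "invariant None c" and msg: "0 < chan c (v, u)" and idle: "status c u = IDLE"
      and parent_u: "parent c u = Some v"
begin

definition c' :: "'v conf" where
  "c' = setl (recv c v u) u (begin_explore (N u) (loc c u))"

lemma msg_facts: "u \<in> V" "v \<in> V" "(v, u) \<in> E" "status c v = EXPLORE" "waiting c v = Some u"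
  "u \<in> N v - set_option (parent c v)"
  using message_cases[OF inv msg] idle by auto

lemma u_ne_r: "u \<noteq> r" using root_facts[OF inv] parent_u by auto

lemma v_ne_u: "v \<noteq> u" using msg_facts(3) edge_irrefl by auto

lemma chan_c: "chan c = (\<lambda>e. if e = (v, u) then 1 else 0)" using chan_single[OF inv msg] .

lemma conf': "loc c' = (loc c)(u := (loc c u)\<lparr>lstatus := EXPLORE, lcount := count c u + 1,
    ltodo := N u - {v}, lwait := None, ldummy := False\<rparr>)" "chan c' = (\<lambda>e. 0)" "nsent c' = nsent c"
  unfolding c'_def begin_explore_def using parent_u by (auto simp: chan_c)

lemma same: "x \<noteq> u \<Longrightarrow> loc c' x = loc c x" for x by (simp add: conf')

lemma count_ok_u: "count_ok_at (loc c u)" using invariant_counts_ok[OF inv] msg_facts(1)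
  unfolding counts_ok_def by blast

lemma count_u_less: "count c u < n - 1" using count_ok_u idle unfolding count_ok_at_def by auto

lemma u_notin_todo_v: "u \<notin> todo c v" using invariant_explore_ok[OF inv] msg_facts
  unfolding explore_ok_def explore_ok_at_def by blast

lemma pending': "x \<noteq> u \<Longrightarrow> pending c' x y = (pending c x y \<and> \<not> (x = v \<and> y = u))" for x y
  using u_notin_todo_v msg_facts(5) by (auto simp: pending_def conf' chan_c)

lemma pending_u': "pending c' u y = (y \<in> N u - {v})" for y by (simp add: pending_def conf')

lemma count_v_pos: "1 \<le> count c v" using invariant_counts_ok[OF inv] msg_facts
  unfolding counts_ok_def count_ok_at_def by auto

lemma probed': "x \<noteq> u \<Longrightarrow> probed c' x y = (probed c x y \<or> (x = v \<and> y = u))" for x y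
proof -
  assume xu: "x \<noteq> u"
  show ?thesis
  proof (cases "x = v")
    case True thus ?thesis using pending'[OF xu] count_v_pos msg_facts(4) xu
      by (auto simp: probed_def same)
  next
    case False thus ?thesis using pending'[OF xu] xu by (simp add: probed_def same)
  qed
qed

lemma probed_u': "probed c' u y = (1 \<le> count c u \<or> y \<notin> N u - {v})" for y
  by (auto simp: probed_def pending_u') (auto simp: conf')

lemma probed_u: "probed c u y = (1 \<le> count c u)" for y using idle by (simp add: probed_def)

lemma root_ok_after: "root_ok c'" using invariant_root_ok[OF inv] u_ne_r unfolding root_ok_def
  by (simp add: conf')

lemma parents_ok_after: "parents_ok c'" using invariant_parents_ok[OF inv] idle
  unfolding parents_ok_def by (auto simp: conf')

lemma children_ok_after: "children_ok c'" using invariant_children_ok[OF inv]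
  unfolding children_ok_def by (auto simp: conf' children_ok_at_def)

lemma counts_ok_after: "counts_ok c'"
proof -
  have new: "count_ok_at (loc c' u)" using count_u_less by (simp add: conf' count_ok_at_def)
  show ?thesis using invariant_counts_ok[OF inv] unfolding counts_ok_def
    by (rule ball_update_local[where u = u]) (use new in \<open>auto simp: conf'\<close>)
qed

lemma explore_ok_after: "explore_ok c'"
proof -
  have new: "explore_ok_at u (loc c' u)" using parent_u by (auto simp: conf' explore_ok_at_def)
  show ?thesis using invariant_explore_ok[OF inv] unfolding explore_ok_def
    by (rule ball_update_local[where u = u]) (use new in \<open>auto simp: conf'\<close>)
qed

lemma explore_chain_after: "explore_chain c'" unfolding explore_chain_def
proof (intro ballI impI)
  fix x assume x: "x \<in> V" "status c' x = EXPLORE \<and> x \<noteq> r"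
  show "\<exists>p. parent c' x = Some p \<and> status c' p = EXPLORE \<and> waiting c' p = Some x"
  proof (cases "x = u")
    case True thus ?thesis using parent_u msg_facts v_ne_u by (simp add: conf')
  next
    case False
    then obtain p where "parent c x = Some p" "status c p = EXPLORE" "waiting c p = Some x"
      using explore_chainD[OF inv] x by (auto simp: conf')
    moreover have "p \<noteq> u" using calculation idle by auto
    ultimately show ?thesis using False by (auto simp: conf')
  qed
qed

lemma channels_ok_after: "channels_ok c'" unfolding channels_ok_def by (simp add: conf')

lemma one_message_after: "one_message c'" unfolding one_message_def by (simp add: conf')

lemma waits_on_child_after: "waits_on_child c'" unfolding waits_on_child_def
proof (intro ballI allI impI)
  fix x w assume x: "x \<in> V"
    and h: "status c' x = EXPLORE \<and> waiting c' x = Some w \<and> status c' w = EXPLORE"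
  hence xu: "x \<noteq> u" by (auto simp: conf')
  show "parent c' w = Some x"
  proof (cases "w = u")
    case True
    have "status c x = EXPLORE" "waiting c x = Some u" using h xu True by (auto simp: conf')
    then obtain w' where "waiting c x = Some w'"
      "status c w' = EXPLORE \<or> 0 < chan c (x, w') \<or> 0 < chan c (w', x)"
      using invariant_control_ok[OF inv] x unfolding control_ok_def by auto
    hence "x = v" using \<open>waiting c x = Some u\<close> idle xu
      by (auto simp: chan_c split: if_splits)
    thus ?thesis using True parent_u by (simp add: conf')
  next
    case False
    hence "parent c w = Some x" using invariant_waits_on_child[OF inv] x h xu
      unfolding waits_on_child_def by (auto simp: conf')
    thus ?thesis using False by (simp add: conf')
  qed
qed

lemma control_ok_after: "control_ok (Some u) c'" unfolding control_ok_def
proof (simp, intro conjI ballI impI)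
  show "u \<in> V" by (rule msg_facts(1))
  show "status c' u = EXPLORE" "waiting c' u = None" "\<forall>a b. chan c' (a, b) = 0"
    by (simp_all add: conf')
  fix x assume x: "x \<in> V" "status c' x = EXPLORE \<and> x \<noteq> u"
  hence x0: "status c x = EXPLORE" by (auto simp: conf')
  obtain w where w: "waiting c x = Some w"
    "status c w = EXPLORE \<or> 0 < chan c (x, w) \<or> 0 < chan c (w, x)"
    using invariant_control_ok[OF inv] x(1) x0 unfolding control_ok_def by auto
  show "\<exists>w. waiting c' x = Some w \<and> status c' w = EXPLORE"
  proof (cases "status c w = EXPLORE")
    case True
    hence "w \<noteq> u" using idle by auto
    thus ?thesis using True w x by (auto simp: conf')
  next
    case False
    hence "(x, w) = (v, u) \<or> (w, x) = (v, u)" using w(2) by (simp add: chan_c split: if_splits)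
    hence "w = u" using x by auto
    thus ?thesis using w x by (auto simp: conf')
  qed
qed

lemma parent_counts_after: "parent_counts c'" unfolding parent_counts_def
proof (intro ballI allI impI)
  fix y x assume y: "y \<in> V" and p: "parent c' y = Some x"
  hence p0: "parent c y = Some x" by (cases "y = u") (simp_all add: conf')
  have old: "count_rel c x y" using count_relD[OF inv y p0] .
  show "count_rel c' x y"
  proof (cases "y = u")
    case True
    hence xv: "x = v" using p0 parent_u by simp
    have "pending c v u" using msg_facts chan_c by (simp add: pending_def)
    moreover have "\<not> pending c' v u" using pending'[of v u] v_ne_u by simp
    ultimately show ?thesis using old True xv msg_facts(4) v_ne_u unfolding count_rel_def
      by (auto simp: conf')
  next
    case False
    show ?thesis
    proof (cases "x = u")
      case True
      have "(y, u) \<in> E" using parent_facts[OF inv y p0] True by simp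
      hence "y \<in> N u" using edge_sym by (auto simp: in_N_iff)
      moreover have "y \<noteq> v" using no_2cycle[OF inv y msg_facts(1)] p0 True parent_u by auto
      ultimately show ?thesis using old True idle False
        by (simp add: count_rel_def conf' pending_u')
    next
      case False
      have "count_rel c' x y = count_rel c x y"
        using pending'[OF False] False \<open>y \<noteq> u\<close>
        by (intro count_rel_cong) (simp_all add: conf')
      thus ?thesis using old by simp
    qed
  qed
qed

lemma init_deep_after: "init_deep c'" using invariant_init_deep[OF inv] u_ne_r idle
  unfolding init_deep_def by (auto simp: conf')

lemma joined_in_last_round_after: "joined_in_last_round c'"
  using invariant_joined_in_last_round[OF inv] idle unfolding joined_in_last_round_def
  by (auto simp: conf' split: if_splits)

lemma probed_joined_after: "probed_joined c'" unfolding probed_joined_def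
proof (intro ballI impI)
  fix x w assume x: "x \<in> V" and w: "w \<in> N x" and se: "probed c' x w"
  have "status c w \<noteq> INIT \<or> w = u"
  proof (cases "x = u")
    case True
    show ?thesis
    proof (cases "1 \<le> count c u")
      case True
      hence "probed c x w" using probed_u \<open>x = u\<close> by simp
      thus ?thesis using invariant_probed_joined[OF inv] x w unfolding probed_joined_def by blast
    next
      case False
      hence "w = v" using se probed_u' True w by auto
      thus ?thesis using msg_facts(4) by simp
    qed
  next
    case False
    hence "probed c x w \<or> w = u" using se probed' by auto
    thus ?thesis using invariant_probed_joined[OF inv] x w unfolding probed_joined_def by blast
  qed
  thus "status c' w \<noteq> INIT" by (auto simp: conf')
qed

lemma children_exact_after: "children_exact c'" unfolding children_exact_def
proof (intro ballI impI)
  fix x w assume x: "x \<in> V" "status c' x \<noteq> INIT" and w: "w \<in> N x - set_option (parent c' x)"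
  have x0: "status c x \<noteq> INIT" using x idle by (cases "x = u") (auto simp: conf')
  have w0: "w \<in> N x - set_option (parent c x)" using w by (cases "x = u") (auto simp: conf')
  have old: "w \<in> children c x \<longleftrightarrow> (parent c w = Some x \<or> \<not> probed c w x)"
    using invariant_children_exact[OF inv] x(1) x0 w0 unfolding children_exact_def by blast
  have eq: "(parent c w = Some x \<or> \<not> probed c' w x) = (parent c w = Some x \<or> \<not> probed c w x)"
  proof (cases "w = u")
    case True
    have "x \<in> N u" using w True edge_sym by (auto simp: in_N_iff)
    thus ?thesis using True parent_u probed_u' probed_u by auto
  next
    case False
    have "\<not> (w = v \<and> x = u)" using w0 parent_u by auto
    thus ?thesis using probed'[OF False] by auto
  qed
  have "children c' x = children c x" "parent c' w = parent c w" by (simp_all add: conf')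
  thus "w \<in> children c' x \<longleftrightarrow> (parent c' w = Some x \<or> \<not> probed c' w x)"
    using old eq by simp
qed

lemma message_budget_after: "message_budget c'"
proof -
  have r1: "reserve c' z = reserve c z" if "z \<in> V" "z \<noteq> u" "z \<noteq> v" for z
    using that
    by (simp add: reserve_def conf' chan_c split: option.splits)
  have r2: "reserve c u = 0" using idle by (simp add: reserve_def)
  have r4: "reserve c v = reserve c' v + 2" using msg_facts v_ne_u
    by (simp add: reserve_def conf' chan_c)
  have chN: "card (children c u) \<le> card (N u)"
    using invariant_children_ok[OF inv] msg_facts(1) finite_N
      unfolding children_ok_def children_ok_at_def by (meson card_mono Diff_subset subset_trans)
  have tN: "card (N u - {v}) \<le> card (N u)" using finite_N by (simp add: card_mono)
  have r3: "reserve c' u = 3 * card (N u - {v}) + 3 * card (children c u) + 2"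
    by (simp add: reserve_def conf')
  have
    "sum (reserve c') V + reserve c u + reserve c v = sum (reserve c) V + reserve c' u + reserve c' v"
    by (rule sum_eq_off_two_points[OF finite_V msg_facts(1,2) v_ne_u[symmetric]]) (rule r1)
  moreover have
    "budget c' + (6 * card (N u) + 2) * count c u = budget c + (6 * card (N u) + 2) * count c' u"
    unfolding budget_def by (rule sum_eq_off_point[OF finite_V msg_facts(1)]) (simp add: conf')
  ultimately show ?thesis using invariant_message_budget[OF inv] r2 r3 r4 chN tN
    unfolding message_budget_def by (simp add: conf' algebra_simps)
qed

lemma invariant_after: "invariant (Some u) c'"
  unfolding invariant_def
  by (intro conjI
    root_ok_after parents_ok_after children_ok_after counts_ok_after explore_ok_after
    explore_chain_after channels_ok_after one_message_after waits_on_child_after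
    control_ok_after parent_counts_after init_deep_after joined_in_last_round_after
    probed_joined_after children_exact_after message_budget_after)
end

locale reply_step = bfs V E r for V :: "'v set" and E r +
  fixes c :: "'v conf" and v u :: 'v
  assumes inv: "invariant None c" and msg: "0 < chan c (v, u)"
      and exploring: "status c u = EXPLORE" and waiting_u: "waiting c u = Some v"
begin

definition c' :: "'v conf" where
  "c' = setl (recv c v u) u ((loc c u)\<lparr>lwait := None\<rparr>)"

lemma msg_facts: "u \<in> V" "v \<in> V" "(v, u) \<in> E" "status c v \<noteq> EXPLORE"
  "v \<in> N u - set_option (parent c u)"
  using message_cases[OF inv msg] exploring by auto

lemma v_ne_u: "v \<noteq> u" using msg_facts(3) edge_irrefl by auto

lemma chan_c: "chan c = (\<lambda>e. if e = (v, u) then 1 else 0)" using chan_single[OF inv msg] .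

lemma conf': "loc c' = (loc c)(u := (loc c u)\<lparr>lwait := None\<rparr>)" "chan c' = (\<lambda>e. 0)"
  "nsent c' = nsent c"
  unfolding c'_def by (auto simp: chan_c)

lemma same: "status c' x = status c x" "parent c' x = parent c x" "count c' x = count c x"
  "todo c' x = todo c x"
  "dummy c' x = dummy c x" "children c' x = children c x" for x by (simp_all add: conf')

lemma pending': "\<And>x y. parent c y = Some x \<or> status c x = EXPLORE \<Longrightarrow> pending c' x y = pending c x y"
proof -
  fix x y assume h: "parent c y = Some x \<or> status c x = EXPLORE"
  have "(x, y) \<noteq> (v, u)" using h msg_facts(4,5) by auto
  thus "pending c' x y = pending c x y" using waiting_u v_ne_u
    by (auto simp: pending_def conf' chan_c)
qed

lemma probed': "probed c' x y = probed c x y" for x y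
  using pending'[of y x] unfolding probed_def by (auto simp: same)

lemma root_ok_after: "root_ok c'" using invariant_root_ok[OF inv] unfolding root_ok_def
  by (simp add: same)

lemma parents_ok_after: "parents_ok c'" using invariant_parents_ok[OF inv] unfolding parents_ok_def
  by (simp add: same)

lemma children_ok_after: "children_ok c'" using invariant_children_ok[OF inv]
  unfolding children_ok_def by (auto simp: conf' children_ok_at_def)

lemma counts_ok_after: "counts_ok c'" using invariant_counts_ok[OF inv] unfolding counts_ok_def
  by (auto simp: conf' count_ok_at_def)

lemma explore_ok_after: "explore_ok c'"
proof -
  have "explore_ok_at u (loc c u)" using invariant_explore_ok[OF inv] msg_facts(1)
    unfolding explore_ok_def by blast
  hence new: "explore_ok_at u (loc c' u)" by (simp add: conf' explore_ok_at_def split: if_splits)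
  show ?thesis using invariant_explore_ok[OF inv] unfolding explore_ok_def
    by (rule ball_update_local[where u = u]) (use new in \<open>auto simp: conf'\<close>)
qed

lemma explore_chain_after: "explore_chain c'" unfolding explore_chain_def
proof (intro ballI impI)
  fix x assume x: "x \<in> V" "status c' x = EXPLORE \<and> x \<noteq> r"
  then obtain p where p: "parent c x = Some p" "status c p = EXPLORE" "waiting c p = Some x"
    using explore_chainD[OF inv] x by (auto simp: same)
  have "p \<noteq> u" using p waiting_u msg_facts(4) x by (auto simp: same)
  thus "\<exists>p. parent c' x = Some p \<and> status c' p = EXPLORE \<and> waiting c' p = Some x"
    using p by (auto simp: conf')
qed

lemma channels_ok_after: "channels_ok c'" unfolding channels_ok_def by (simp add: conf')

lemma one_message_after: "one_message c'" unfolding one_message_def by (simp add: conf')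

lemma waits_on_child_after: "waits_on_child c'" using invariant_waits_on_child[OF inv]
  unfolding waits_on_child_def by (auto simp: conf')

lemma control_ok_after: "control_ok (Some u) c'" unfolding control_ok_def
proof (simp, intro conjI ballI impI)
  show "u \<in> V" by (rule msg_facts(1))
  show "status c' u = EXPLORE" "waiting c' u = None" "\<forall>a b. chan c' (a, b) = 0"
    using exploring by (simp_all add: conf')
  fix x assume x: "x \<in> V" "status c' x = EXPLORE \<and> x \<noteq> u"
  hence x0: "status c x = EXPLORE" by (simp add: same)
  obtain w where w: "waiting c x = Some w"
    "status c w = EXPLORE \<or> 0 < chan c (x, w) \<or> 0 < chan c (w, x)"
    using invariant_control_ok[OF inv] x(1) x0 unfolding control_ok_def by auto
  have "\<not> ((x, w) = (v, u) \<or> (w, x) = (v, u))" using x x0 msg_facts(4) by auto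
  hence "status c w = EXPLORE" using w(2) by (auto simp: chan_c split: if_splits)
  thus "\<exists>w. waiting c' x = Some w \<and> status c' w = EXPLORE" using w x
    by (auto simp: conf')
qed

lemma parent_counts_after: "parent_counts c'" unfolding parent_counts_def
proof (intro ballI allI impI)
  fix y x assume y: "y \<in> V" and p: "parent c' y = Some x"
  hence p0: "parent c y = Some x" by (simp add: same)
  have "count_rel c' x y = count_rel c x y" using pending'[of y x] p0
    by (intro count_rel_cong) (simp_all add: same)
  thus "count_rel c' x y" using count_relD[OF inv y p0] by simp
qed

lemma init_deep_after: "init_deep c'" using invariant_init_deep[OF inv] unfolding init_deep_def
  by (simp add: same)

lemma joined_in_last_round_after: "joined_in_last_round c'"
  using invariant_joined_in_last_round[OF inv] unfolding joined_in_last_round_def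
  by (simp add: same)

lemma probed_joined_after: "probed_joined c'" using invariant_probed_joined[OF inv]
  unfolding probed_joined_def by (simp add: same probed')

lemma children_exact_after: "children_exact c'" using invariant_children_exact[OF inv]
  unfolding children_exact_def by (simp add: same probed')

lemma message_budget_after: "message_budget c'"
proof -
  have r1: "reserve c' z = reserve c z" if "z \<in> V" "z \<noteq> u" for z
  proof (cases "z = v")
    case True thus ?thesis using msg_facts(4) by (simp add: reserve_def same)
  next
    case False thus ?thesis using that by (simp add: reserve_def conf' chan_c split: option.splits)
  qed
  have r2: "reserve c u = reserve c' u + 1" using exploring waiting_u v_ne_u
    by (simp add: reserve_def conf' chan_c)
  have "sum (reserve c') V + reserve c u = sum (reserve c) V + reserve c' u"
    by (rule sum_eq_off_point[OF finite_V msg_facts(1)]) (rule r1)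
  moreover have "budget c' = budget c" by (intro budget_cong) (simp add: same)
  ultimately show ?thesis using invariant_message_budget[OF inv] r2 unfolding message_budget_def
    by (simp add: conf')
qed

lemma invariant_after: "invariant (Some u) c'"
  unfolding invariant_def
  by (intro conjI
    root_ok_after parents_ok_after children_ok_after counts_ok_after explore_ok_after
    explore_chain_after channels_ok_after one_message_after waits_on_child_after
    control_ok_after parent_counts_after init_deep_after joined_in_last_round_after
    probed_joined_after children_exact_after message_budget_after)
end

locale send_step = bfs V E r for V :: "'v set" and E r +
  fixes c :: "'v conf" and u w :: 'v
  assumes inv: "invariant (Some u) c" and w_in_todo: "w \<in> todo c u"
begin

definition c' :: "'v conf" where
  "c' = send (setl c u ((loc c u)\<lparr>ltodo := todo c u - {w}, lwait := Some w\<rparr>)) u w"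

lemma active: "u \<in> V" "status c u = EXPLORE" "waiting c u = None" "\<And>e. chan c e = 0"
  "\<And>x. x \<in> V \<Longrightarrow> status c x = EXPLORE \<Longrightarrow> x \<noteq> u \<Longrightarrow> \<exists>w. waiting c x = Some w \<and> status c w = EXPLORE"
  using active_facts[OF inv] by auto

lemma explore_ok_u: "explore_ok_at u (loc c u)" by (rule active_exp[OF inv])

lemma children_u: "children c u \<subseteq> N u - set_option (parent c u)"
  using invariant_children_ok[OF inv] active(1) unfolding children_ok_def children_ok_at_def
  by blast

lemma w_nbr: "w \<in> N u - set_option (parent c u)"
  using explore_ok_u active(2) w_in_todo children_u unfolding explore_ok_at_def
  by (auto split: if_splits)

lemma w_in_V: "w \<in> V" using w_nbr N_subset_V by blast

lemma w_ne_u: "w \<noteq> u" using w_nbr edge_irrefl by (auto simp: in_N_iff)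

lemma w_not_exploring: "status c w \<noteq> EXPLORE" by (rule active_nbr_not_explore[OF inv w_nbr])

lemma chan_c: "chan c = (\<lambda>e. 0)" using active(4) by auto

lemma conf': "loc c' = (loc c)(u := (loc c u)\<lparr>ltodo := todo c u - {w}, lwait := Some w\<rparr>)"
  "chan c' = (\<lambda>e. if e = (u, w) then 1 else 0)" "nsent c' = Suc (nsent c)"
  unfolding c'_def by (auto simp: chan_c)

lemma same: "status c' x = status c x" "parent c' x = parent c x" "count c' x = count c x"
  "dummy c' x = dummy c x" "children c' x = children c x" for x
  by (simp_all add: conf')

lemma pending': "pending c' x y = pending c x y" for x y
  using active(3) w_in_todo by (cases "x = u") (auto simp: pending_def conf' chan_c)

lemma probed': "probed c' x y = probed c x y" for x y unfolding probed_def
  by (simp add: same pending')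

lemma root_ok_after: "root_ok c'" using invariant_root_ok[OF inv] unfolding root_ok_def
  by (simp add: same)

lemma parents_ok_after: "parents_ok c'" using invariant_parents_ok[OF inv] unfolding parents_ok_def
  by (simp add: same)

lemma children_ok_after: "children_ok c'" using invariant_children_ok[OF inv]
  unfolding children_ok_def by (auto simp: conf' children_ok_at_def)

lemma counts_ok_after: "counts_ok c'" using invariant_counts_ok[OF inv] unfolding counts_ok_def
  by (auto simp: conf' count_ok_at_def)

lemma explore_ok_after: "explore_ok c'"
proof -
  have new: "explore_ok_at u (loc c' u)" using explore_ok_u w_nbr active(2)
    by (auto simp: conf' explore_ok_at_def split: if_splits)
  show ?thesis using invariant_explore_ok[OF inv] unfolding explore_ok_def
    by (rule ball_update_local[where u = u]) (use new in \<open>auto simp: conf'\<close>)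
qed

lemma explore_chain_after: "explore_chain c'" unfolding explore_chain_def
proof (intro ballI impI)
  fix x assume x: "x \<in> V" "status c' x = EXPLORE \<and> x \<noteq> r"
  then obtain p where p: "parent c x = Some p" "status c p = EXPLORE" "waiting c p = Some x"
    using explore_chainD[OF inv] x by (auto simp: same)
  have "p \<noteq> u" using p active(3) by auto
  thus "\<exists>p. parent c' x = Some p \<and> status c' p = EXPLORE \<and> waiting c' p = Some x"
    using p by (auto simp: conf')
qed

lemma channels_ok_after: "channels_ok c'" unfolding channels_ok_def
  using active(1,2) w_in_V w_not_exploring by (auto simp: conf')

lemma one_message_after: "one_message c'" unfolding one_message_def
  by (auto simp: conf' split: if_splits)

lemma waits_on_child_after: "waits_on_child c'" unfolding waits_on_child_def
proof (intro ballI allI impI)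
  fix x w' assume x: "x \<in> V"
    and h: "status c' x = EXPLORE \<and> waiting c' x = Some w' \<and> status c' w' = EXPLORE"
  show "parent c' w' = Some x"
  proof (cases "x = u")
    case True
    hence "w' = w" using h by (simp add: conf')
    thus ?thesis using True h w_not_exploring w_ne_u by (simp add: conf')
  next
    case False thus ?thesis using invariant_waits_on_child[OF inv] x h unfolding waits_on_child_def
      by (auto simp: conf')
  qed
qed

lemma control_ok_after: "control_ok None c'" unfolding control_ok_def
proof (simp, intro ballI impI)
  fix x assume x: "x \<in> V" "status c' x = EXPLORE"
  show
    "\<exists>w'. waiting c' x = Some w' \<and> (status c' w' = EXPLORE \<or> 0 < chan c' (x, w') \<or> 0 < chan c' (w', x))"
  proof (cases "x = u")
    case True thus ?thesis by (simp add: conf')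
  next
    case False
    then obtain w' where "waiting c x = Some w'" "status c w' = EXPLORE" using active(5) x
      by (auto simp: same)
    thus ?thesis using False by (auto simp: conf')
  qed
qed

lemma parent_counts_after: "parent_counts c'" unfolding parent_counts_def
proof (intro ballI allI impI)
  fix y x assume y: "y \<in> V" and p: "parent c' y = Some x"
  hence p0: "parent c y = Some x" by (simp add: same)
  have "count_rel c' x y = count_rel c x y" by (intro count_rel_cong) (simp_all add: same pending')
  thus "count_rel c' x y" using count_relD[OF inv y p0] by simp
qed

lemma init_deep_after: "init_deep c'" using invariant_init_deep[OF inv] unfolding init_deep_def
  by (simp add: same)

lemma joined_in_last_round_after: "joined_in_last_round c'"
  using invariant_joined_in_last_round[OF inv] unfolding joined_in_last_round_def
  by (simp add: same)

lemma probed_joined_after: "probed_joined c'" using invariant_probed_joined[OF inv]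
  unfolding probed_joined_def by (simp add: same probed')

lemma children_exact_after: "children_exact c'" using invariant_children_exact[OF inv]
  unfolding children_exact_def by (simp add: same probed')

lemma message_budget_after: "message_budget c'"
proof -
  have r1: "reserve c' z = reserve c z" if "z \<in> V" "z \<noteq> u" for z
  proof (cases "z = w")
    case True thus ?thesis using w_not_exploring by (simp add: reserve_def same)
  next
    case False thus ?thesis using that by (simp add: reserve_def conf' chan_c split: option.splits)
  qed
  have "todo c u \<subseteq> N u" using explore_ok_u active(2) children_u
    unfolding explore_ok_at_def by (auto split: if_splits)
  hence ft: "finite (todo c u)" using finite_N finite_subset by blast
  have ct: "card (todo c u - {w}) + 1 = card (todo c u)" using ft w_in_todo card_Suc_Diff1
    by fastforce
  have r2: "reserve c u + 2 = reserve c' u + 3" using active(2,3) w_ne_u ct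
    by (simp add: reserve_def conf')
  have "sum (reserve c') V + reserve c u = sum (reserve c) V + reserve c' u"
    by (rule sum_eq_off_point[OF finite_V active(1)]) (rule r1)
  moreover have "budget c' = budget c" by (intro budget_cong) (simp add: same)
  ultimately show ?thesis using invariant_message_budget[OF inv] r2 unfolding message_budget_def
    by (simp add: conf')
qed

lemma invariant_after: "invariant None c'"
  unfolding invariant_def
  by (intro conjI
    root_ok_after parents_ok_after children_ok_after counts_ok_after explore_ok_after
    explore_chain_after channels_ok_after one_message_after waits_on_child_after
    control_ok_after parent_counts_after init_deep_after joined_in_last_round_after
    probed_joined_after children_exact_after message_budget_after)
end

locale dummy_step = bfs V E r for V :: "'v set" and E r +
  fixes c :: "'v conf" and u :: 'v
  assumes inv: "invariant (Some u) c" and no_todo: "todo c u = {}" and not_dummy: "\<not> dummy c u"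
      and last_round: "count c u = n - 1"
begin

definition c' :: "'v conf" where
  "c' = setl c u ((loc c u)\<lparr>ltodo := children c u, ldummy := True\<rparr>)"

lemma active: "u \<in> V" "status c u = EXPLORE" "waiting c u = None" "\<And>e. chan c e = 0"
  "\<And>x. x \<in> V \<Longrightarrow> status c x = EXPLORE \<Longrightarrow> x \<noteq> u \<Longrightarrow> \<exists>w. waiting c x = Some w \<and> status c w = EXPLORE"
  using active_facts[OF inv] by auto

lemma conf': "loc c' = (loc c)(u := (loc c u)\<lparr>ltodo := children c u, ldummy := True\<rparr>)"
  "chan c' = chan c" "nsent c' = nsent c"
  unfolding c'_def by auto

lemma same: "status c' x = status c x" "parent c' x = parent c x" "count c' x = count c x"
  "waiting c' x = waiting c x" "children c' x = children c x" for x
  by (simp_all add: conf')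

lemma not_pending_u: "\<not> pending c u y" for y using no_todo active(3) by (simp add: pending_def)

lemma pending': "x \<noteq> u \<Longrightarrow> pending c' x y = pending c x y" for x y
  by (simp add: pending_def conf')

lemma pending_u': "pending c' u y = (y \<in> children c u)" for y using active(3)
  by (simp add: pending_def conf')

lemma probed': "probed c' x y = probed c x y" for x y
proof (cases "x = u")
  case True thus ?thesis using not_pending_u last_round n_minus_1_pos
    by (simp add: probed_def conf')
next
  case False thus ?thesis using pending'[OF False] by (simp add: probed_def conf')
qed

text \<open>The parent of \<open>u\<close> could be in a non-dummy exploration only with count \<open>n\<close>.\<close>

lemma parent_in_last_round:
  assumes "u \<noteq> r"
  shows "\<exists>p\<in>V. status c p = EXPLORE \<and> dummy c p"
proof -
  obtain p where p: "parent c u = Some p" "status c p = EXPLORE" "waiting c p = Some u"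
    using explore_chainD[OF inv active(1,2) assms] by blast
  have pV: "p \<in> V" using parent_facts[OF inv active(1) p(1)] by simp
  have "dummy c p"
  proof (rule ccontr)
    assume "\<not> dummy c p"
    moreover have "\<not> pending c p u" by (rule not_pending_of_exploring[OF inv active(1,2) pV p(2,3)])
    moreover have "count_rel c p u" by (rule count_relD[OF inv active(1) p(1)])
    ultimately have "count c u + 1 = count c p" using p(2) unfolding count_rel_def by simp
    moreover have "count c p \<le> n - 1"
      using invariant_counts_ok[OF inv] pV unfolding counts_ok_def count_ok_at_def by blast
    ultimately show False using last_round n_minus_1_pos by simp
  qed
  thus ?thesis using pV p(2) by blast
qed

text \<open>At the root, round \<open>n - 1\<close> has been completed and has reached every node.\<close>

lemma all_joined: "\<forall>v\<in>V. status c v \<noteq> INIT"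
proof (cases "u \<noteq> r \<or> (\<exists>x\<in>V. (status c x = EXPLORE \<and> dummy c x) \<or> status c x = DONE)")
  case True
  thus ?thesis using parent_in_last_round invariant_joined_in_last_round[OF inv]
    unfolding joined_in_last_round_def by blast
next
  case False
  hence u_r: "u = r" by blast
  have only_root: "\<forall>x\<in>V. status c x = EXPLORE \<longrightarrow> x = r"
  proof (intro ballI impI, rule ccontr)
    fix x assume "x \<in> V" "status c x = EXPLORE" "x \<noteq> r"
    then obtain y where "waiting c r = Some y" using root_waits_on_exploring[OF inv] by blast
    thus False using active(3) u_r by simp
  qed
  have "\<forall>y\<in>V. parent c y = Some r \<longrightarrow> count c y + 1 = count c r"
  proof (intro ballI impI)
    fix y assume "y \<in> V" "parent c y = Some r"
    hence "count_rel c r y" by (rule count_relD[OF inv])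
    thus "count c y + 1 = count c r"
      using active(2) not_dummy not_pending_u[of y] u_r unfolding count_rel_def by simp
  qed
  with only_root show ?thesis
    using quiescent_joined[OF inv] False not_pending_u u_r last_round d_le_n_minus_1 by auto
qed

lemma root_ok_after: "root_ok c'" using invariant_root_ok[OF inv] unfolding root_ok_def
  by (simp add: same)

lemma parents_ok_after: "parents_ok c'" using invariant_parents_ok[OF inv] unfolding parents_ok_def
  by (simp add: same)

lemma children_ok_after: "children_ok c'" using invariant_children_ok[OF inv]
  unfolding children_ok_def by (auto simp: conf' children_ok_at_def)

lemma counts_ok_after: "counts_ok c'" using invariant_counts_ok[OF inv] unfolding counts_ok_def
  by (auto simp: conf' count_ok_at_def)

lemma explore_ok_after: "explore_ok c'"
proof -
  have new: "explore_ok_at u (loc c' u)" using active(2,3) last_round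
    by (simp add: conf' explore_ok_at_def)
  show ?thesis using invariant_explore_ok[OF inv] unfolding explore_ok_def
    by (rule ball_update_local[where u = u]) (use new in \<open>auto simp: conf'\<close>)
qed

lemma explore_chain_after: "explore_chain c'" using invariant_explore_chain[OF inv]
  unfolding explore_chain_def by (simp add: same)

lemma channels_ok_after: "channels_ok c'" using active(4) unfolding channels_ok_def
  by (simp add: conf')

lemma one_message_after: "one_message c'" using active(4) unfolding one_message_def
  by (simp add: conf')

lemma waits_on_child_after: "waits_on_child c'" using invariant_waits_on_child[OF inv]
  unfolding waits_on_child_def by (simp add: same)

lemma control_ok_after: "control_ok (Some u) c'" using invariant_control_ok[OF inv]
  unfolding control_ok_def by (simp only: same conf'(2) option.case) auto

lemma parent_counts_after: "parent_counts c'" unfolding parent_counts_def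
proof (intro ballI allI impI)
  fix y x assume y: "y \<in> V" and p: "parent c' y = Some x"
  hence p0: "parent c y = Some x" by (simp add: same)
  have old: "count_rel c x y" by (rule count_relD[OF inv y p0])
  show "count_rel c' x y"
  proof (cases "x = u")
    case True
    have "(y, u) \<in> E" using parent_facts[OF inv y p0] True by simp
    hence yu: "y \<noteq> u" using edge_irrefl by auto
    have "y \<in> N u" using \<open>(y, u) \<in> E\<close> edge_sym by (auto simp: in_N_iff)
    moreover have "parent c u \<noteq> Some y" using no_2cycle[OF inv y active(1)] p0 True by simp
    ultimately have "y \<in> children c u"
      using invariant_children_exact[OF inv] active(1,2) p0 True unfolding children_exact_def
      by auto
    thus ?thesis using old True active(2) not_dummy not_pending_u last_round yu
      unfolding count_rel_def by (simp add: conf' pending_u')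
  next
    case False
    have "count_rel c' x y = count_rel c x y" using pending'[OF False] False
      by (intro count_rel_cong) (simp_all add: conf')
    thus ?thesis using old by simp
  qed
qed

lemma init_deep_after: "init_deep c'" using invariant_init_deep[OF inv] unfolding init_deep_def
  by (simp add: same)

lemma joined_in_last_round_after: "joined_in_last_round c'" using all_joined
  unfolding joined_in_last_round_def by (simp add: same)

lemma probed_joined_after: "probed_joined c'" using invariant_probed_joined[OF inv]
  unfolding probed_joined_def by (simp add: same probed')

lemma children_exact_after: "children_exact c'" using invariant_children_exact[OF inv]
  unfolding children_exact_def by (simp add: same probed')

lemma message_budget_after: "message_budget c'"
proof -
  have "reserve c' z = reserve c z" for z
    using no_todo not_dummy active(2,3)
      by (cases "z = u") (simp_all add: reserve_def conf' split: option.splits)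
  hence "sum (reserve c') V = sum (reserve c) V" by simp
  moreover have "budget c' = budget c" by (intro budget_cong) (simp add: same)
  ultimately show ?thesis using invariant_message_budget[OF inv] unfolding message_budget_def
    by (simp add: conf')
qed

lemma invariant_after: "invariant (Some u) c'"
  unfolding invariant_def
  by (intro conjI
    root_ok_after parents_ok_after children_ok_after counts_ok_after explore_ok_after
    explore_chain_after channels_ok_after one_message_after waits_on_child_after
    control_ok_after parent_counts_after init_deep_after joined_in_last_round_after
    probed_joined_after children_exact_after message_budget_after)
end

locale finish_step = bfs V E r for V :: "'v set" and E r +
  fixes c c' :: "'v conf" and u :: 'v
  assumes inv: "invariant (Some u) c" and no_todo: "todo c u = {}"
    and finishing: "dummy c u \<or> count c u \<noteq> n - 1"
    and loc_c': "loc c' = (loc c)(u := finish_state c u)"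
    and chan_c': "\<And>x y. x \<noteq> u \<Longrightarrow> chan c' (x, y) = chan c (x, y)"
begin

lemma active: "u \<in> V" "status c u = EXPLORE" "waiting c u = None" "\<And>e. chan c e = 0"
  using active_facts[OF inv] by auto

lemma status_u': "status c' u = (if count c u = n - 1 then DONE else IDLE)"
  by (simp add: loc_c' finish_state_def)

lemma status_u'_ne: "status c' u \<noteq> EXPLORE" "status c' u \<noteq> INIT"
  using status_u' by auto

lemma status': "x \<noteq> u \<Longrightarrow> status c' x = status c x"
  by (simp add: loc_c')

lemma same: "parent c' x = parent c x" "count c' x = count c x" "children c' x = children c x"
  "todo c' x = todo c x" "waiting c' x = waiting c x" "dummy c' x = dummy c x"
  by (simp_all add: loc_c' finish_state_def)

lemma init_iff: "status c' x = INIT \<longleftrightarrow> status c x = INIT"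
  using status_u'_ne active(2) status' by (cases "x = u") auto

lemma not_pending_u: "\<not> pending c u y"
  using no_todo active(3) by (simp add: pending_def)

lemma pending': "x \<noteq> u \<Longrightarrow> pending c' x y = pending c x y"
  by (simp add: pending_def loc_c' chan_c')

lemma probed': "probed c' x y = probed c x y"
proof (cases "x = u")
  case True
  have "1 \<le> count c u"
    using invariant_counts_ok[OF inv] active(1,2) unfolding counts_ok_def count_ok_at_def by auto
  thus ?thesis using True status_u'_ne not_pending_u by (simp add: probed_def same)
next
  case False thus ?thesis using pending'[OF False] status'[OF False] by (simp add: probed_def same)
qed

lemma parents_ok_after: "parents_ok c'"
  using invariant_parents_ok[OF inv] unfolding parents_ok_def by (simp add: same init_iff)

lemma children_ok_after: "children_ok c'"
  using invariant_children_ok[OF inv] unfolding children_ok_def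
  by (auto simp: loc_c' children_ok_at_def finish_state_def)

lemma counts_ok_after: "counts_ok c'"
proof -
  have "count_ok_at (loc c u)" using invariant_counts_ok[OF inv] active(1) unfolding counts_ok_def
    by blast
  hence "count_ok_at (loc c' u)" by (auto simp: loc_c' count_ok_at_def finish_state_def)
  thus ?thesis using invariant_counts_ok[OF inv] unfolding counts_ok_def
    by (rule ball_update_local[where u = u, rotated 2]) (simp_all add: loc_c')
qed

lemma explore_ok_after: "explore_ok c'"
proof -
  have "explore_ok_at u (loc c' u)" using status_u'_ne by (auto simp: explore_ok_at_def)
  thus ?thesis using invariant_explore_ok[OF inv] unfolding explore_ok_def
    by (rule ball_update_local[where u = u, rotated 2]) (simp add: loc_c')
qed

lemma init_deep_after: "init_deep c'"
  using invariant_init_deep[OF inv] unfolding init_deep_def by (simp add: same init_iff)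

text \<open>A node becomes \<open>DONE\<close> only at the end of its dummy exploration.\<close>

lemma joined_in_last_round_after: "joined_in_last_round c'"
proof -
  have "\<exists>x\<in>V. (status c x = EXPLORE \<and> dummy c x) \<or> status c x = DONE"
    if "x \<in> V" "(status c' x = EXPLORE \<and> dummy c' x) \<or> status c' x = DONE" for x
  proof (cases "x = u")
    case True
    hence "count c u = n - 1" using that status_u' by (auto split: if_splits)
    hence "dummy c u" using finishing by simp
    thus ?thesis using active(1,2) by blast
  next
    case False thus ?thesis using that status'[OF False] same by auto
  qed
  thus ?thesis using invariant_joined_in_last_round[OF inv] init_iff
    unfolding joined_in_last_round_def by blast
qed

lemma parent_counts_after: "parent_counts c'"
  unfolding parent_counts_def
proof (intro ballI allI impI)
  fix y x assume y: "y \<in> V" and "parent c' y = Some x"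
  hence p: "parent c y = Some x" by (simp add: same)
  have old: "count_rel c x y" by (rule count_relD[OF inv y p])
  show "count_rel c' x y"
  proof (cases "x = u")
    case True
    show ?thesis
    proof (cases "dummy c u")
      case dummy: True
      hence "count c u = n - 1"
        using invariant_explore_ok[OF inv] active(1,2) unfolding explore_ok_def explore_ok_at_def
          by blast
      thus ?thesis using True old active(2) dummy not_pending_u[of y] status_u'
        unfolding count_rel_def by (simp add: same)
    next
      case not_dummy: False
      hence "count c u \<noteq> n - 1" using finishing by simp
      thus ?thesis using True old active(2) not_dummy not_pending_u[of y] status_u'
        unfolding count_rel_def by (simp add: same)
    qed
  next
    case False
    have "count_rel c' x y = count_rel c x y"
      using pending'[OF False] status'[OF False] by (intro count_rel_cong) (simp_all add: same)
    thus ?thesis using old by simp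
  qed
qed

lemma probed_joined_after: "probed_joined c'"
  using invariant_probed_joined[OF inv] unfolding probed_joined_def by (simp add: probed' init_iff)

lemma children_exact_after: "children_exact c'"
  using invariant_children_exact[OF inv] unfolding children_exact_def
    by (simp add: probed' same init_iff)

lemma reserve_u': "reserve c' u = 0"
  using status_u'_ne by (simp add: reserve_def)

lemma budget': "budget c' = budget c"
  by (intro budget_cong) (simp add: same)

end

locale finish_child_step = finish_step V E r c c' u for V :: "'v set" and E r c c' u +
  fixes p :: 'v
  assumes parent_u: "parent c u = Some p" and c'_eq: "c' = send (setl c u (finish_state c u)) u p"
begin

lemma conf': "chan c' = (\<lambda>e. if e = (u, p) then 1 else 0)" "nsent c' = Suc (nsent c)"
  unfolding c'_eq using active(4) by auto

lemma u_ne_r: "u \<noteq> r" using root_facts[OF inv] parent_u by auto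

lemma p_facts: "p \<in> V" "(u, p) \<in> E" "p \<noteq> u" "status c p = EXPLORE" "waiting c p = Some u"
proof -
  show "p \<in> V" "(u, p) \<in> E" using parent_facts[OF inv active(1) parent_u] by auto
  thus "p \<noteq> u" using edge_irrefl by auto
  show "status c p = EXPLORE" "waiting c p = Some u"
    using explore_chainD[OF inv active(1,2) u_ne_r] parent_u by auto
qed

lemma root_ok_after: "root_ok c'"
  using invariant_root_ok[OF inv] u_ne_r status' unfolding root_ok_def by (simp add: same)

lemma explore_chain_after: "explore_chain c'"
  unfolding explore_chain_def
proof (intro ballI impI)
  fix x assume x: "x \<in> V" "status c' x = EXPLORE \<and> x \<noteq> r"
  hence "x \<noteq> u" using status_u'_ne by auto
  then obtain q where q: "parent c x = Some q" "status c q = EXPLORE" "waiting c q = Some x"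
    using explore_chainD[OF inv] x status' by auto
  have "q \<noteq> u" using q active(3) by auto
  thus "\<exists>q. parent c' x = Some q \<and> status c' q = EXPLORE \<and> waiting c' q = Some x"
    using q status' by (auto simp: same)
qed

lemma channels_ok_after: "channels_ok c'"
  unfolding channels_ok_def using active(1) p_facts status_u'_ne status'[OF p_facts(3)]
  by (auto simp: conf' same)

lemma one_message_after: "one_message c'"
  unfolding one_message_def by (auto simp: conf' split: if_splits)

lemma waits_on_child_after: "waits_on_child c'"
  unfolding waits_on_child_def
proof (intro ballI allI impI)
  fix x w assume x: "x \<in> V"
    and h: "status c' x = EXPLORE \<and> waiting c' x = Some w \<and> status c' w = EXPLORE"
  have "x \<noteq> u" "w \<noteq> u" using h status_u'_ne by auto
  thus "parent c' w = Some x"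
    using invariant_waits_on_child[OF inv] x h status' unfolding waits_on_child_def
      by (auto simp: same)
qed

lemma control_ok_after: "control_ok None c'"
  unfolding control_ok_def
proof (simp, intro ballI impI)
  fix x assume x: "x \<in> V" "status c' x = EXPLORE"
  hence xu: "x \<noteq> u" using status_u'_ne by auto
  then obtain w where w: "waiting c x = Some w" "status c w = EXPLORE"
    using active_facts[OF inv] x status' by auto
  show
    "\<exists>w. waiting c' x = Some w \<and> (status c' w = EXPLORE \<or> 0 < chan c' (x, w) \<or> 0 < chan c' (w, x))"
  proof (cases "w = u")
    case True
    have "parent c u = Some x"
      using invariant_waits_on_child[OF inv] x w True status'[OF xu] unfolding waits_on_child_def
        by auto
    hence "x = p" using parent_u by simp
    thus ?thesis using w True p_facts(3) by (simp add: conf' same)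
  next
    case False thus ?thesis using w status' by (auto simp: same)
  qed
qed

lemma message_budget_after: "message_budget c'"
proof -
  have "reserve c' z = reserve c z" if "z \<in> V" "z \<noteq> u" "z \<noteq> p" for z
    using that status'[of z] by (simp add: reserve_def conf' active(4) same split: option.splits)
  hence
    "sum (reserve c') V + reserve c u + reserve c p = sum (reserve c) V + reserve c' u + reserve c' p"
    by (rule sum_eq_off_two_points[OF finite_V active(1) p_facts(1) p_facts(3)[symmetric]])
  moreover have "2 \<le> reserve c u" using active(2) by (simp add: reserve_def)
  moreover have "reserve c' p = reserve c p + 1"
    using p_facts status'[OF p_facts(3)] by (simp add: reserve_def conf' active(4) same)
  ultimately show ?thesis
    using invariant_message_budget[OF inv] reserve_u' budget' unfolding message_budget_def
      by (simp add: conf')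
qed

lemma invariant_after: "invariant None c'"
  unfolding invariant_def
  by (intro conjI
    root_ok_after parents_ok_after children_ok_after counts_ok_after explore_ok_after
    explore_chain_after channels_ok_after one_message_after waits_on_child_after
    control_ok_after parent_counts_after init_deep_after joined_in_last_round_after
    probed_joined_after children_exact_after message_budget_after)

end

locale finish_root_step = finish_step V E r c c' u for V :: "'v set" and E r c c' u +
  assumes parent_u: "parent c u = None" and c'_eq: "c' = setl c u (finish_state c u)"
begin

lemma conf': "chan c' = (\<lambda>e. 0)" "nsent c' = nsent c"
  unfolding c'_eq using active(4) by auto

lemma u_eq_r: "u = r"
  using invariant_parents_ok[OF inv] active(1,2) parent_u unfolding parents_ok_def by auto

lemma nothing_explores:
  assumes x: "x \<in> V"
  shows "status c' x \<noteq> EXPLORE"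
proof (cases "x = u")
  case True thus ?thesis using status_u'_ne by simp
next
  case False
  show ?thesis
  proof
    assume "status c' x = EXPLORE"
    hence "status c x = EXPLORE" using status'[OF False] by simp
    then obtain y where "waiting c r = Some y" using root_waits_on_exploring[OF inv x] u_eq_r False
      by blast
    thus False using active(3) u_eq_r by simp
  qed
qed

lemma root_ok_after: "root_ok c'"
  using invariant_root_ok[OF inv] u_eq_r status_u'_ne unfolding root_ok_def by (simp add: same)

lemma explore_chain_after: "explore_chain c'"
  unfolding explore_chain_def using nothing_explores by blast

lemma channels_ok_after: "channels_ok c'"
  unfolding channels_ok_def by (simp add: conf')

lemma one_message_after: "one_message c'"
  unfolding one_message_def by (simp add: conf')

lemma waits_on_child_after: "waits_on_child c'"
  unfolding waits_on_child_def using nothing_explores by blast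

lemma control_ok_after: "control_ok None c'"
  unfolding control_ok_def using nothing_explores by simp

lemma message_budget_after: "message_budget c'"
proof -
  have "reserve c' z = reserve c z" if "z \<in> V" "z \<noteq> u" for z
    using that status'[of z] by (simp add: reserve_def conf' active(4) same split: option.splits)
  hence "sum (reserve c') V + reserve c u = sum (reserve c) V + reserve c' u"
    by (rule sum_eq_off_point[OF finite_V active(1)])
  thus ?thesis
    using invariant_message_budget[OF inv] reserve_u' budget' unfolding message_budget_def
      by (simp add: conf')
qed

lemma invariant_after: "invariant None c'"
  unfolding invariant_def
  by (intro conjI
    root_ok_after parents_ok_after children_ok_after counts_ok_after explore_ok_after
    explore_chain_after channels_ok_after one_message_after waits_on_child_after
    control_ok_after parent_counts_after init_deep_after joined_in_last_round_after
    probed_joined_after children_exact_after message_budget_after)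

end

context bfs
begin

lemma invariant_adv: "adv n u c c' \<Longrightarrow> invariant (Some u) c \<Longrightarrow> invariant None c'"
proof (induct rule: adv.induct)
  case (adv_send w c u)
  then interpret send_step V E r c u w by unfold_locales
  show ?case using invariant_after unfolding c'_def .
next
  case (adv_dummy c u c')
  then interpret dummy_step V E r c u by unfold_locales
  show ?case using adv_dummy(5) invariant_after unfolding c'_def by blast
next
  case (adv_fin c u c')
  show ?case
  proof (cases "parent c u")
    case None
    interpret finish_root_step V E r c "setl c u (finish_state c u)" u
      by unfold_locales (use adv_fin None in \<open>simp_all add: finish_state_def\<close>)
    show ?thesis using adv_fin(3) None invariant_after unfolding finish_state_def by simp
  next
    case (Some p)
    interpret finish_child_step V E r c "send (setl c u (finish_state c u)) u p" u p
      by unfold_locales (use adv_fin Some in \<open>simp_all add: finish_state_def\<close>)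
    show ?thesis using adv_fin(3) Some invariant_after unfolding finish_state_def by simp
  qed
qed

lemma no_message_ignored:
  assumes inv: "invariant None c" and m: "0 < chan c (v, u)" and s: "status c u \<noteq> INIT"
    and c1: "\<not> (status c u \<in> {IDLE, DONE} \<and> parent c u \<noteq> Some v)"
    and c2: "\<not> (status c u = IDLE \<and> parent c u = Some v)"
    and c3: "\<not> (status c u = EXPLORE \<and> waiting c u = Some v)"
  shows False
proof -
  have msg_facts: "v \<in> V" "u \<in> V"
    "(status c v = EXPLORE \<and> waiting c v = Some u \<and> status c u \<noteq> EXPLORE) \<or> (status c u = EXPLORE \<and> waiting c u = Some v)"
    using message_cases[OF inv m] by auto
  hence h: "status c v = EXPLORE" "waiting c v = Some u" "status c u \<noteq> EXPLORE" using c3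
    by auto
  have "status c u \<in> {IDLE, DONE}" using s h(3) by (cases "status c u") auto
  hence pu: "parent c u = Some v" and du: "status c u = DONE" using c1 c2 by auto
  have "count_rel c v u" by (rule count_relD[OF inv msg_facts(2) pu])
  moreover have "pending c v u" using h(2) m by (simp add: pending_def)
  moreover have "count c u = n - 1" using invariant_counts_ok[OF inv] msg_facts(2) du
    unfolding counts_ok_def count_ok_at_def by auto
  moreover have "count c v \<le> n - 1" using invariant_counts_ok[OF inv] msg_facts(1)
    unfolding counts_ok_def count_ok_at_def by auto
  ultimately show False using h(1) unfolding count_rel_def by (auto split: if_splits)
qed

lemma invariant_step: "step V E r c c' \<Longrightarrow> invariant None c \<Longrightarrow> invariant None c'"
proof (induct rule: step.induct)
  case (root_invoke c c')
  then interpret root_invoke_step V E r c by unfold_locales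
  show ?case using invariant_adv[OF root_invoke(2)] invariant_after unfolding c'_def by blast
next
  case (set_parent c v u)
  then interpret set_parent_step V E r c v u by unfold_locales
  show ?case using invariant_after unfolding c'_def .
next
  case (mark_sibling c v u)
  then interpret mark_sibling_step V E r c v u by unfold_locales
  show ?case using invariant_after unfolding c'_def .
next
  case (explore c v u c')
  then interpret explore_step V E r c v u by unfold_locales
  show ?case using invariant_adv[OF explore(4)] invariant_after unfolding c'_def by blast
next
  case (reply c v u c')
  then interpret reply_step V E r c v u by unfold_locales
  show ?case using invariant_adv[OF reply(4)] invariant_after unfolding c'_def by blast
next
  case (ignore c v u)
  thus ?case using no_message_ignored by blast
qed

lemma invariant_reachable: "reachable V E r c \<Longrightarrow> invariant None c"
  unfolding reachable_def
proof (induct rule: rtranclp_induct)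
  case base thus ?case by (rule invariant_init)
next
  case (step y z) thus ?case using invariant_step by blast
qed

end

section \<open>Termination and message complexity\<close>

lemma adv_frame: "adv m u c c' \<Longrightarrow> (\<forall>x. x \<noteq> u \<longrightarrow> loc c' x = loc c x) \<and> count c' u = count c u \<and>
  ((nsent c' = Suc (nsent c) \<and> status c' u = status c u) \<or>
   (status c' u \<noteq> EXPLORE \<and> nsent c' = nsent c + (if parent c u = None then 0 else 1)))"
proof (induct rule: adv.induct)
  case (adv_send w c u) thus ?case by simp
next
  case (adv_dummy c u c') thus ?case by simp
next
  case (adv_fin c u c') thus ?case by (auto split: option.splits)
qed

lemma adv_exists: "\<exists>c'. adv m u c c'"
proof (cases "todo c u = {}")
  case False
  then obtain w where "w \<in> todo c u" by blast
  thus ?thesis by (blast intro: adv_send)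
next
  case True
  show ?thesis
  proof (cases "dummy c u \<or> count c u \<noteq> m - 1")
    case True
    show ?thesis by (rule exI, rule adv_fin[OF \<open>todo c u = {}\<close> True refl])
  next
    case False
    let ?c1 = "setl c u ((loc c u)\<lparr>ltodo := lchildren (loc c u), ldummy := True\<rparr>)"
    have "\<exists>c'. adv m u ?c1 c'"
    proof (cases "todo ?c1 u = {}")
      case False
      then obtain w where "w \<in> todo ?c1 u" by blast
      thus ?thesis by (blast intro: adv_send)
    next
      case True
      show ?thesis by (rule exI, rule adv_fin[OF True _ refl]) simp
    qed
    thus ?thesis using True False by (blast intro: adv_dummy)
  qed
qed


lemma message_enables_step:
  assumes m: "0 < chan c (v, u)"
  shows "\<exists>c'. step V E r c c'"
proof -
  obtain c1 where c1: "adv (card V) u (setl (recv c v u) u (begin_explore (nbrs E u) (loc c u))) c1"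
    using adv_exists by meson
  obtain c2 where c2: "adv (card V) u (setl (recv c v u) u ((loc c u)\<lparr>lwait := None\<rparr>)) c2"
    using adv_exists by meson
  show ?thesis
    using set_parent[OF m] mark_sibling[OF m] explore[OF m _ _ c1] reply[OF m _ _ c2] ignore[OF m]
      by blast
qed

context bfs
begin

lemma messages_bounded: "invariant a c \<Longrightarrow> nsent c \<le> 16 * n * num_edges E"
proof -
  assume inv: "invariant a c"
  have "nsent c \<le> budget c" using invariant_message_budget[OF inv] unfolding message_budget_def
    by simp
  also have "budget c \<le> (\<Sum>u\<in>V. (6 * card (N u) + 2) * (n - 1))"
    unfolding budget_def using invariant_counts_ok[OF inv] unfolding counts_ok_def count_ok_at_def
      by (intro sum_mono mult_le_mono2) auto
  also have "\<dots> = (6 * card E + 2 * n) * (n - 1)"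
  proof -
    have "(\<Sum>u\<in>V. (6 * card (N u) + 2) * k) = (\<Sum>u\<in>V. 6 * card (N u) + 2) * k" for k :: nat
      by (simp add: sum_distrib_right)
    moreover have "(\<Sum>u\<in>V. 6 * card (N u) + 2) = 6 * card E + 2 * n"
    proof -
      have "(\<Sum>u\<in>V. 6 * card (N u) + 2) = (\<Sum>u\<in>V. 6 * card (N u)) + (\<Sum>u\<in>V. (2::nat))"
        by (rule sum.distrib)
      also have "(\<Sum>u\<in>V. 6 * card (N u)) = 6 * (\<Sum>u\<in>V. card (N u))"
        by (rule sum_distrib_left[symmetric])
      finally show ?thesis using sum_card_nbrs[OF finite_V E_subset] by simp
    qed
    ultimately show ?thesis by simp
  qed
  also have "\<dots> \<le> (8 * card E) * n" using n_le_card_E by (intro mult_le_mono) auto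
  also have "\<dots> \<le> (16 * num_edges E) * n" using card_le_twice_num_edges[OF finite_E]
    by (intro mult_le_mono1) linarith
  finally show ?thesis by (simp add: algebra_simps)
qed

lemma root_count_bounded: "invariant a c \<Longrightarrow> count c r \<le> n - 1"
  using invariant_counts_ok root_in_V unfolding counts_ok_def count_ok_at_def by blast

text \<open>Every step sends a message, starts an exploration at the root, or ends one.\<close>

definition progress :: "'v conf \<Rightarrow> nat" where
  "progress c = 2 * (nsent c + count c r) + (if status c r = EXPLORE then 0 else 1)"

lemma progress_increases: "step V E r c c' \<Longrightarrow> invariant None c \<Longrightarrow> progress c < progress c'"
proof (induct rule: step.induct)
  case (root_invoke c c')
  let ?c1 = "setl c r (begin_explore (N r) (loc c r))"
  have "count ?c1 r = count c r + 1" "nsent ?c1 = nsent c" by (simp_all add: begin_explore_def)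
  moreover have "count c' r = count ?c1 r" "nsent c' \<ge> nsent ?c1"
    using adv_frame[OF root_invoke(2)] by auto
  ultimately show ?case using root_invoke(1) unfolding progress_def by simp
next
  case (set_parent c v u)
  have "u \<noteq> r" using root_facts[OF set_parent(3)] set_parent(2) by auto
  thus ?case unfolding progress_def by simp
next
  case (mark_sibling c v u)
  thus ?case unfolding progress_def by (cases "u = r") auto
next
  case (explore c v u c')
  have u_ne_r: "u \<noteq> r" using root_facts[OF explore(5)] explore(3) by auto
  let ?c1 = "setl (recv c v u) u (begin_explore (N u) (loc c u))"
  have F: "loc c' r = loc ?c1 r" "nsent c' = Suc (nsent ?c1)"
    using adv_frame[OF explore(4)] u_ne_r explore(3) by (auto simp: begin_explore_def)
  thus ?case using u_ne_r unfolding progress_def by simp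
next
  case (reply c v u c')
  let ?c1 = "setl (recv c v u) u ((loc c u)\<lparr>lwait := None\<rparr>)"
  note F = adv_frame[OF reply(4)]
  show ?case
  proof (cases "u = r")
    case False
    have uV: "u \<in> V" using message_cases[OF reply(5) reply(1)] by blast
    have "parent c u \<noteq> None" using invariant_parents_ok[OF reply(5)] uV False reply(2)
      unfolding parents_ok_def by auto
    hence "loc c' r = loc c r" "nsent c' = Suc (nsent c)" using F False by auto
    thus ?thesis unfolding progress_def by simp
  next
    case True
    have pr: "parent c r = None" using root_facts[OF reply(5)] by simp
    show ?thesis using F True pr reply(2) unfolding progress_def by auto
  qed
next
  case (ignore c v u)
  thus ?case using no_message_ignored by blast
qed

lemma progress_bounded: "invariant None c \<Longrightarrow> progress c \<le> 2 * (16 * n * num_edges E + (n - 1)) + 1"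
  using messages_bounded[of None c] root_count_bounded[of None c] unfolding progress_def by auto

lemma no_infinite_execution: "\<not> (\<exists>f. f 0 = init_conf E r \<and> (\<forall>i. step V E r (f i) (f (Suc i))))"
proof
  assume "\<exists>f. f 0 = init_conf E r \<and> (\<forall>i. step V E r (f i) (f (Suc i)))"
  then obtain f where f0: "f 0 = init_conf E r" and fs: "\<And>i. step V E r (f i) (f (Suc i))"
    by blast
  have R: "reachable V E r (f i)" for i
  proof (induct i)
    case 0 thus ?case using f0 by (simp add: reachable_def)
  next
    case (Suc i) thus ?case using fs[of i] unfolding reachable_def
      by (rule rtranclp.rtrancl_into_rtrancl)
  qed
  have M: "i \<le> progress (f i)" for i
  proof (induct i)
    case 0 thus ?case by simp
  next
    case (Suc i) thus ?case using progress_increases[OF fs[of i] invariant_reachable[OF R[of i]]]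
      by simp
  qed
  let ?K = "2 * (16 * n * num_edges E + (n - 1)) + 1"
  have "Suc ?K \<le> progress (f (Suc ?K))" by (rule M)
  moreover have "progress (f (Suc ?K)) \<le> ?K"
    by (rule progress_bounded[OF invariant_reachable[OF R]])
  ultimately show False by simp
qed

section \<open>Terminal configurations\<close>

lemma terminal_no_messages: "terminal V E r c \<Longrightarrow> chan c e = 0"
  using message_enables_step[of c "fst e" "snd e" V E r] unfolding terminal_def by auto

text \<open>A deepest exploring node would have to wait for a message in transit.\<close>

lemma quiet_root_not_exploring:
  assumes inv: "invariant None c" and no_msg: "\<And>e. chan c e = 0"
  shows "status c r \<noteq> EXPLORE"
proof
  assume "status c r = EXPLORE"
  have "\<forall>y. y \<in> V \<and> status c y = EXPLORE \<longrightarrow> d y < n"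
    using d_le_n_minus_1 two_nodes by fastforce
  then obtain x where x: "x \<in> V" "status c x = EXPLORE"
    and deepest: "\<And>y. y \<in> V \<Longrightarrow> status c y = EXPLORE \<Longrightarrow> d y \<le> d x"
    using ex_has_greatest_nat[of "\<lambda>x. x \<in> V \<and> status c x = EXPLORE" r d n] \<open>status c r = EXPLORE\<close> root_in_V
    by blast
  obtain w where w: "waiting c x = Some w" "status c w = EXPLORE"
    using invariant_control_ok[OF inv] x no_msg unfolding control_ok_def by auto
  have wV: "w \<in> V"
    using invariant_explore_ok[OF inv] x w N_subset_V unfolding explore_ok_def explore_ok_at_def
      by blast
  have "parent c w = Some x" using invariant_waits_on_child[OF inv] x w
    unfolding waits_on_child_def by blast
  hence "d x + 1 = d w" using parent_facts[OF inv wV] by blast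
  thus False using deepest[OF wV w(2)] by simp
qed

lemma terminal_root_done:
  assumes inv: "invariant None c" and t: "terminal V E r c"
  shows "status c r = DONE"
proof -
  obtain c' where "adv (card V) r (setl c r (begin_explore (nbrs E r) (loc c r))) c'"
    using adv_exists by meson
  hence "status c r \<noteq> IDLE" using t step.root_invoke[of c r V E] unfolding terminal_def
    by blast
  moreover have "status c r \<noteq> EXPLORE"
    using quiet_root_not_exploring[OF inv terminal_no_messages[OF t]] .
  moreover have "status c r \<noteq> INIT" using root_facts[OF inv] by simp
  ultimately show ?thesis by (cases "status c r") auto
qed

text \<open>Once the root is \<open>DONE\<close>, every parent is \<open>DONE\<close>, and a child of a \<open>DONE\<close> node has count
  \<open>n - 1\<close> and is not exploring.\<close>

lemma all_done_of_root_done: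
  assumes inv: "invariant None c" and root_done: "status c r = DONE"
  shows "u \<in> V \<Longrightarrow> status c u = DONE"
proof (induct u rule: depth_induct)
  case (step u)
  have joined: "\<forall>u\<in>V. status c u \<noteq> INIT"
    using invariant_joined_in_last_round[OF inv] root_done root_in_V
      unfolding joined_in_last_round_def by blast
  show ?case
  proof (cases "u = r")
    case True thus ?thesis using root_done by simp
  next
    case False
    obtain p where p: "parent c u = Some p"
      using parent_exists[OF inv step(1) False] joined step(1) by blast
    have "d p + 1 = d u" "p \<in> V" using parent_facts[OF inv step(1) p] by auto
    hence "status c p = DONE" using step(2) by simp
    hence "count c u = n - 1" using count_relD[OF inv step(1) p] unfolding count_rel_def by simp
    moreover have "count_ok_at (loc c u)" using invariant_counts_ok[OF inv] step(1)
      unfolding counts_ok_def by blast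
    moreover have "status c u \<noteq> EXPLORE" using root_explores[OF inv step(1)] root_done
      by auto
    ultimately show ?thesis using joined step(1) unfolding count_ok_at_def
      by (cases "status c u") auto
  qed
qed

lemma joined_parents_bfs:
  assumes inv: "invariant a c" and joined: "\<forall>u\<in>V. status c u \<noteq> INIT" and u: "u \<in> V - {r}"
  shows "\<exists>p. parent c u = Some p \<and> (u, p) \<in> E \<and> d p + 1 = d u"
  using parent_exists[OF inv] parent_facts[OF inv] joined u by blast

lemma done_children_exact:
  assumes inv: "invariant a c" and all_done: "\<forall>u\<in>V. status c u = DONE" and u: "u \<in> V"
  shows "children c u = {v\<in>V. parent c v = Some u}"
proof -
  have probed: "probed c w u" if "w \<in> V" for w
    using all_done that n_minus_1_pos invariant_counts_ok[OF inv]
    unfolding probed_def counts_ok_def count_ok_at_def by auto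
  have exact: "w \<in> children c u \<longleftrightarrow> parent c w = Some u" if w: "w \<in> N u - set_option (parent c u)"
    for w
  proof -
    have "probed c w u" using w N_subset_V probed by blast
    thus ?thesis using invariant_children_exact[OF inv] u all_done w unfolding children_exact_def
      by auto
  qed
  have "children c u \<subseteq> N u - set_option (parent c u)"
    using invariant_children_ok[OF inv] u unfolding children_ok_def children_ok_at_def by blast
  moreover have "w \<in> N u - set_option (parent c u)" if "w \<in> V" "parent c w = Some u" for w
    using parent_facts[OF inv that] no_2cycle[OF inv that(1) u that(2)] edge_sym
      by (auto simp: in_N_iff)
  ultimately show ?thesis using exact N_subset_V by blast
qed

lemma terminal_correct:
  assumes "reachable V E r c" and t: "terminal V E r c"
  shows "(\<forall>e. chan c e = 0) \<and> lstatus (loc c r) = DONE \<and>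
    (\<forall>u\<in>V - {r}. \<exists>p. lparent (loc c u) = Some p \<and> (u, p) \<in> E \<and> gdist E r p + 1 = gdist E r u) \<and>
    (\<forall>u\<in>V. lchildren (loc c u) = {v\<in>V. lparent (loc c v) = Some u})"
proof -
  have inv: "invariant None c" using invariant_reachable assms(1) .
  have all_done: "\<forall>u\<in>V. status c u = DONE"
    using all_done_of_root_done[OF inv terminal_root_done[OF inv t]] by blast
  show ?thesis
    using terminal_no_messages[OF t] terminal_root_done[OF inv t] joined_parents_bfs[OF inv]
      done_children_exact[OF inv all_done] all_done by auto
qed

end

theorem mainTheorem4:
  "\<exists>C::nat. \<forall>(V :: 'v set) E r.
     simple_graph V E \<and> graph_connected V E \<and> r \<in> V \<and> card V \<ge> 2 \<longrightarrow>
       \<comment> \<open>termination: no infinite execution\<close>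
       \<not> (\<exists>f. f 0 = init_conf E r \<and> (\<forall>i. step V E r (f i) (f (Suc i))))
     \<and> \<comment> \<open>at termination: no message in transit, root DONE, BFS tree, children sets\<close>
       (\<forall>c. reachable V E r c \<and> terminal V E r c \<longrightarrow>
          (\<forall>e. chan c e = 0) \<and>
          lstatus (loc c r) = DONE \<and>
          (\<forall>u\<in>V - {r}. \<exists>p. lparent (loc c u) = Some p \<and> (u, p) \<in> E \<and>
                            gdist E r p + 1 = gdist E r u) \<and>
          (\<forall>u\<in>V. lchildren (loc c u) = {v\<in>V. lparent (loc c v) = Some u}))
     \<and> \<comment> \<open>message complexity O(nm)\<close>
       (\<forall>c. reachable V E r c \<longrightarrow> nsent c \<le> C * card V * num_edges E)"
proof (intro exI[of _ 16] allI impI)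
  fix V :: "'v set" and E r
  assume "simple_graph V E \<and> graph_connected V E \<and> r \<in> V \<and> card V \<ge> 2"
  then interpret bfs V E r by unfold_locales auto
  show "\<not> (\<exists>f. f 0 = init_conf E r \<and> (\<forall>i. step V E r (f i) (f (Suc i))))
     \<and> (\<forall>c. reachable V E r c \<and> terminal V E r c \<longrightarrow>
          (\<forall>e. chan c e = 0) \<and> lstatus (loc c r) = DONE \<and>
          (\<forall>u\<in>V - {r}. \<exists>p. lparent (loc c u) = Some p \<and> (u, p) \<in> E \<and> gdist E r p + 1 = gdist E r u) \<and>
          (\<forall>u\<in>V. lchildren (loc c u) = {v\<in>V. lparent (loc c v) = Some u}))
     \<and> (\<forall>c. reachable V E r c \<longrightarrow> nsent c \<le> 16 * card V * num_edges E)"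
    using no_infinite_execution terminal_correct invariant_reachable messages_bounded by blast
qed

end
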